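(* Let $\ell$ be a positive integer and let $B^*=3\times 2^{\ell-1}-2$. The switching system described below (one crossbar switch with a controller, and $2\ell-1$ groups of three 4-to-1 FIFO multiplexers, operated by the routing policy described below) is an optical priority queue with buffer $B^*$; that is, started empty at time $0$, it satisfies properties (P1)–(P5) below with $B=B^*$ at every time $t>0$, for every arrival sequence, every assignment of distinct priorities and every sequence of departure requests.
   Context: Time is slotted ($t=1,2,\dots$), packets have fixed size and one packet traverses a link in one slot, so each link is in state $1$ (carries a packet) or $0$ at each time. An $n\times n$ crossbar switch is a memoryless element that can connect its $n$ inputs to its $n$ outputs by any permutation, packets passing instantaneously. Priority queue. A network element has an arrival link, a departure link, a loss link and a controller. Each arriving packet carries a unique priority. If at the beginning of time $t$ there are $k$ packets in the element (counting the arriving packet, if any) and packet $i$ has the $j$-th highest priority among them, its tag is $\tau_i(t)=j$. Let $a(t),d(t),l(t)\in\{0,1\}$ be the states of the arrival, departure, loss links at time $t$, $c(t)=1$ if the controller issues a departure request at $t$ and $0$ otherwise, and $q(t)$ the number of packets buffered at time $t$. Starting empty at time $0$, the element is a priority queue with buffer $B$ if for every $t>0$: (P1) $q(t)=q(t-1)+a(t)-d(t)-l(t)$; (P2) $d(t)=1$ iff $c(t)=1$ and $q(t-1)+a(t)>0$; (P3) $l(t)=1$ iff $c(t)=0$, $q(t-1)=B$ and $a(t)=1$; (P4) a packet $i$ departing at $t$ has $\tau_i(t)=1$; (P5) a packet $i$ lost at $t$ has $\tau_i(t)=B+1$. 4-to-1 multiplexer with buffer $\tilde B$: an element with $4$ input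 links (states $\tilde a_1(t),\dots,\tilde a_4(t)$), one departure link $\tilde d(t)$ and $3$ loss links $\tilde l_1(t),\tilde l_2(t),\tilde l_3(t)$, with buffer content $\tilde q(t)$, satisfying (M1) $\tilde q(t)=\tilde q(t-1)+\sum_{i=1}^4\tilde a_i(t)-\tilde d(t)-\sum_{i=1}^3\tilde l_i(t)$; (M2) $\tilde d(t)=1$ iff $\tilde q(t-1)+\sum_i\tilde a_i(t)>0$; (M3) $\tilde l_i(t)=1$ iff $\tilde q(t-1)+\sum_{i'}\tilde a_{i'}(t)\ge \tilde B+i+1$; (M4) packets depart in FIFO order. Notation: for integers $a\le b$, $\langle a,b\rangle=\{a,a+1,\dots,b\}$. For $j=1,\dots,\ell$ let $\Psi_j=\langle 2^{j-1},2^j-1\rangle$, and for $j=\ell+1,\dots,2\ell-1$ let $\Psi_j=\langle 3\cdot2^{\ell-1}-2^{2\ell-j},\,3\cdot 2^{\ell-1}-2^{2\ell-j-1}-1\rangle$. Let $B_1=B_{2\ell-1}=1$, $B_j=2^{j-2}$ for $2\le j\le \ell$, and $B_j=2^{2\ell-j-2}$ for $\ell+1\le j\le 2\ell-2$. Structure. For each $j=1,\dots,2\ell-1$, the $j$-th group consists of three 4-to-1 multiplexers each with buffer $B_j$; the group's $12$ input links are indexed $0,\dots,11$, where for $i=0,1,2$ the inputs of the $i$-th multiplexer are the group inputs $i,i+3,i+6,i+9$. Every group input link is fed by a distinct output of a single crossbar switch; the departure output of each multiplexer feeds a distinct input of the switch. The switch also has the external arrival input, a departure output and a loss output. Tags $\tau_i(t)$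 refer to all packets in the whole system (in the multiplexer buffers, on the arrival link). Routing policy at the beginning of each time $t$: (i) if $c(t)=1$, among the packets leaving the multiplexers of groups $1$ and $2$ and the arriving packet (if any), the one with highest priority is sent to the departure link; (ii) if $c(t)=0$, $a(t)=1$ and $q(t-1)=B^*$, among the arriving packet and the packets leaving the multiplexers of group $2\ell-1$, the one with lowest priority is sent to the loss link; (iii) every other packet $i$ entering the switch at $t$ is sent to group $j$ with $\tau_i(t)\in\Psi_j$. If $k$ packets are sent to group $j$ at time $t$ and $u_j(t)$ is the index of the group input last used before $t$ (with $u_j(1)=0$), they use group inputs $(u_j(t)+1)\bmod 12,\dots,(u_j(t)+k)\bmod 12$, and $u_j(t+1)=(u_j(t)+k)\bmod 12$. *)

theory Defs
  imports Main
begin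

definition Bstar :: "nat \<Rightarrow> nat" where
  "Bstar l = 3 * 2 ^ (l - 1) - 2"

definition Psi :: "nat \<Rightarrow> nat \<Rightarrow> nat set" where
  "Psi l j = (if j \<le> l then {2 ^ (j - 1) .. 2 ^ j - 1}
              else {3 * 2 ^ (l - 1) - 2 ^ (2 * l - j) .. 3 * 2 ^ (l - 1) - 2 ^ (2 * l - j - 1) - 1})"

definition Bmux :: "nat \<Rightarrow> nat \<Rightarrow> nat" where
  "Bmux l j = (if j = 1 \<or> j = 2 * l - 1 then 1
               else if j \<le> l then 2 ^ (j - 2) else 2 ^ (2 * l - j - 2))"

definition grps :: "nat \<Rightarrow> nat set" where
  "grps l = {1 .. 2 * l - 1}"

text \<open>Group to which a packet with tag k is sent by rule (iii).  Tags beyond B* (which the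
  informal policy leaves unspecified) are sent to the last group 2l-1.\<close>
definition assigned :: "nat \<Rightarrow> nat \<Rightarrow> nat \<Rightarrow> bool" where
  "assigned l k j \<longleftrightarrow> k \<in> Psi l j \<or> (j = 2 * l - 1 \<and> Bstar l < k)"

text \<open>A packet is identified by its arrival time t (at most one packet arrives per slot).\<close>
definition arr_set :: "(nat \<Rightarrow> bool) \<Rightarrow> nat \<Rightarrow> nat set" where
  "arr_set a t = (if a t then {t} else {})"

text \<open>Packets departing at time n from the multiplexers of the groups in J
  (they are on the links towards the switch and enter the switch at time n+1).\<close>
definition outs :: "nat \<Rightarrow> (nat \<Rightarrow> nat \<Rightarrow> nat \<Rightarrow> nat option) \<Rightarrow> nat \<Rightarrow> nat set \<Rightarrow> nat set" where
  "outs l out n J = {p. \<exists>j \<in> J \<inter> grps l. \<exists>m < 3. out n j m = Some p}"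

definition stored :: "nat \<Rightarrow> (nat \<Rightarrow> nat \<Rightarrow> nat \<Rightarrow> nat list) \<Rightarrow> (nat \<Rightarrow> nat \<Rightarrow> nat \<Rightarrow> nat option)
    \<Rightarrow> nat \<Rightarrow> nat set" where
  "stored l buf out n = (\<Union>j \<in> grps l. \<Union>m \<in> {..<3}. set (buf n j m)) \<union> outs l out n (grps l)"

definition qsys :: "nat \<Rightarrow> (nat \<Rightarrow> nat \<Rightarrow> nat \<Rightarrow> nat list) \<Rightarrow> (nat \<Rightarrow> nat \<Rightarrow> nat \<Rightarrow> nat option)
    \<Rightarrow> nat \<Rightarrow> nat" where
  "qsys l buf out n = card (stored l buf out n)"

definition tag :: "nat \<Rightarrow> (nat \<Rightarrow> bool) \<Rightarrow> (nat \<Rightarrow> 'p::linorder) \<Rightarrow> (nat \<Rightarrow> nat \<Rightarrow> nat \<Rightarrow> nat list)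
    \<Rightarrow> (nat \<Rightarrow> nat \<Rightarrow> nat \<Rightarrow> nat option) \<Rightarrow> nat \<Rightarrow> nat \<Rightarrow> nat" where
  "tag l a prio buf out t p =
     card {p' \<in> stored l buf out (t - 1) \<union> arr_set a t. prio p \<le> prio p'}"

text \<open>buf n j m : FIFO content (head first) of multiplexer m of group j at the end of time n;
  out n j m : packet departing that multiplexer at time n;
  dep t / loss t : packet on the departure / loss link of the switch at time t;
  route t j g : packet on input g (0..11) of group j at time t;
  u t j : the index u_j(t).\<close>
definition sys_run :: "nat \<Rightarrow> (nat \<Rightarrow> bool) \<Rightarrow> (nat \<Rightarrow> 'p::linorder) \<Rightarrow> (nat \<Rightarrow> bool)
    \<Rightarrow> (nat \<Rightarrow> nat \<Rightarrow> nat \<Rightarrow> nat list) \<Rightarrow> (nat \<Rightarrow> nat \<Rightarrow> nat \<Rightarrow> nat option)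
    \<Rightarrow> (nat \<Rightarrow> nat option) \<Rightarrow> (nat \<Rightarrow> nat option) \<Rightarrow> (nat \<Rightarrow> nat \<Rightarrow> nat \<Rightarrow> nat option)
    \<Rightarrow> (nat \<Rightarrow> nat \<Rightarrow> nat) \<Rightarrow> bool" where
  "sys_run l a prio c buf out dep loss route u \<longleftrightarrow>
     (\<forall>j m. buf 0 j m = [] \<and> out 0 j m = None) \<and>
     (\<forall>j. u 1 j = 0) \<and>
     (\<forall>n. let t = Suc n;
              E = arr_set a t \<union> outs l out n (grps l);
              C1 = arr_set a t \<union> outs l out n {1, 2};
              C2 = arr_set a t \<union> outs l out n {2 * l - 1};
              tg = tag l a prio buf out t;
              R = (\<lambda>j. {p \<in> E - set_option (dep t) - set_option (loss t). assigned l (tg p) j})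
          in
            \<comment> \<open>rule (i)\<close>
            (if c t \<and> C1 \<noteq> {}
             then (\<exists>p. dep t = Some p \<and> p \<in> C1 \<and> (\<forall>p' \<in> C1. prio p' \<le> prio p))
             else dep t = None) \<and>
            \<comment> \<open>rule (ii)\<close>
            (if \<not> c t \<and> a t \<and> qsys l buf out n = Bstar l
             then (\<exists>p. loss t = Some p \<and> p \<in> C2 \<and> (\<forall>p' \<in> C2. prio p \<le> prio p'))
             else loss t = None) \<and>
            \<comment> \<open>rule (iii), with the round-robin use of the 12 group inputs\<close>
            (\<forall>j \<in> grps l.
               let k = card (R j);
                   U = {(u t j + i) mod 12 | i. 1 \<le> i \<and> i \<le> k}
               in (\<forall>g < 12. route t j g \<noteq> None \<longleftrightarrow> g \<in> U) \<and>
                  bij_betw (\<lambda>g. the (route t j g)) U (R j) \<and>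
                  u (Suc t) j = (u t j + k) mod 12) \<and>
            \<comment> \<open>the 4-to-1 FIFO multiplexers (M1)-(M4); multiplexer m of group j has inputs m, m+3, m+6, m+9\<close>
            (\<forall>j \<in> grps l. \<forall>m < 3.
               \<exists>xs. distinct xs \<and>
                    set xs = {p. \<exists>g < 12. g mod 3 = m \<and> route t j g = Some p} \<and>
                    (let L = buf n j m @ xs in
                       out t j m = (if L = [] then None else Some (hd L)) \<and>
                       buf t j m \<in> set (subseqs (tl L)) \<and>
                       length (buf t j m) = min (Bmux l j) (length L - 1))))"

definition priority_queue :: "nat \<Rightarrow> (nat \<Rightarrow> bool) \<Rightarrow> (nat \<Rightarrow> bool) \<Rightarrow> (nat \<Rightarrow> nat)
    \<Rightarrow> (nat \<Rightarrow> 'k option) \<Rightarrow> (nat \<Rightarrow> 'k option) \<Rightarrow> (nat \<Rightarrow> 'k \<Rightarrow> nat) \<Rightarrow> bool" where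
  "priority_queue B a c q dep loss tg \<longleftrightarrow>
     q 0 = 0 \<and>
     (\<forall>t > 0.
        int (q t) = int (q (t - 1)) + of_bool (a t) - of_bool (dep t \<noteq> None) - of_bool (loss t \<noteq> None) \<and>
        (dep t \<noteq> None \<longleftrightarrow> c t \<and> q (t - 1) + of_bool (a t) > 0) \<and>
        (loss t \<noteq> None \<longleftrightarrow> \<not> c t \<and> q (t - 1) = B \<and> a t) \<and>
        (\<forall>i. dep t = Some i \<longrightarrow> tg t i = 1) \<and>
        (\<forall>i. loss t = Some i \<longrightarrow> tg t i = B + 1))"

end

theory Submission
  imports Defs "HOL-Library.Sublist"
begin

(* A packet is routed to the group whose tag range contains its tag when it enters the switch, and
   it leaves that group within B_j slots.  Since at most one packet arrives and at most one leaves per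
   slot, tags drift by at most one per slot.  Three consequences make the system a priority queue.
   First, the packet of highest priority is either arriving or leaving a multiplexer of group 1 or 2,
   and when the system is full the packet of lowest priority is arriving or leaving group 2l-1; so
   rules (i) and (ii) remove exactly the packets (P4) and (P5) require.  Second, group j never holds
   more than 3 B_j - 1 packets, because its tag range has width at most 2 B_j; as the round robin
   keeps the three multiplexers of a group balanced, none of them ever exceeds its buffer and no
   packet is lost inside the switch.  Third, a packet can only drift to a neighbouring group, so at
   most 10 packets are sent to a group per slot and its 12 inputs always suffice. *)

section \<open>Tag ranges of the groups\<close>

text \<open>\<open>Psi l j = {tag_lo l j .. tag_hi l j}\<close>, except that the range of the last group is extended
  by the tag \<open>Bstar l + 1\<close>, which only an arriving packet that finds the system full can have.\<close>
definition tag_lo :: "nat \<Rightarrow> nat \<Rightarrow> nat" where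
  "tag_lo l j = (if j \<le> l then 2 ^ (j - 1) else 3 * 2 ^ (l - 1) - 2 ^ (2 * l - j))"

definition tag_hi :: "nat \<Rightarrow> nat \<Rightarrow> nat" where
  "tag_hi l j = (if j = 2 * l - 1 then Bstar l + 1
                 else if j \<le> l then 2 ^ j - 1 else 3 * 2 ^ (l - 1) - 2 ^ (2 * l - j - 1) - 1)"

lemma power2_eq_double_pred: "1 \<le> i \<Longrightarrow> (2::nat) ^ i = 2 * 2 ^ (i - 1)"
  by (cases i) simp_all

lemma tag_lo_1: "1 \<le> l \<Longrightarrow> tag_lo l 1 = 1"
  by (simp add: tag_lo_def)

lemma tag_lo_last: "2 \<le> l \<Longrightarrow> tag_lo l (2 * l - 1) = Bstar l"
  by (simp add: tag_lo_def Bstar_def)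

lemma tag_hi_last: "tag_hi l (2 * l - 1) = Bstar l + 1"
  by (simp add: tag_hi_def)

lemma Bmux_eq_1: "j \<le> 2 \<or> j = 2 * l - 1 \<Longrightarrow> Bmux l j = 1"
  by (auto simp: Bmux_def)

lemma tag_lo_Suc:
  assumes "1 \<le> j" "j < 2 * l - 1"
  shows "tag_lo l (Suc j) = Suc (tag_hi l j)"
proof -
  consider "Suc j \<le> l" | "j = l" | "l < j" by linarith
  then show ?thesis
  proof cases
    case 1
    then show ?thesis using assms by (simp add: tag_lo_def tag_hi_def)
  next
    case 2
    then show ?thesis
      using assms power2_eq_double_pred[of l] by (simp add: tag_lo_def tag_hi_def)
  next
    case 3
    define i where "i = 2 * l - Suc j"
    have i: "2 * l - j = Suc i" "2 * l - Suc j = i" "2 * l - j - 1 = i" "Suc i \<le> l - 1"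
      unfolding i_def using 3 assms by auto
    have "2 * 2 ^ i \<le> (2::nat) ^ (l - 1)" "(1::nat) \<le> 2 ^ i"
      using power_increasing[OF i(4), of "2::nat"] by simp_all
    moreover have "tag_lo l (Suc j) = 3 * 2 ^ (l - 1) - 2 ^ i" "tag_hi l j = 3 * 2 ^ (l - 1) - 2 ^ i - 1"
      using 3 assms i by (simp_all add: tag_lo_def tag_hi_def)
    ultimately show ?thesis by linarith
  qed
qed

lemma group_width:
  assumes "1 \<le> j" "j \<le> 2 * l - 1"
  shows "Suc (tag_hi l j) - tag_lo l j = (if j = 1 \<and> 2 \<le> l then 1 else 2 * Bmux l j)"
proof -
  consider "j = 2 * l - 1" | "j \<le> l" "j \<noteq> 2 * l - 1" | "l < j" "j < 2 * l - 1"
    using assms by linarith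
  then show ?thesis
  proof cases
    case 1
    then show ?thesis
      using assms tag_lo_last[of l] by (cases "l = 1") (auto simp: tag_hi_def tag_lo_def Bmux_def Bstar_def)
  next
    case 2
    then show ?thesis
      using assms power2_eq_double_pred[of j] power2_eq_double_pred[of "j - 1"]
      by (auto simp: tag_hi_def tag_lo_def Bmux_def)
  next
    case 3
    define k where "k = 2 * l - j - 2"
    have k: "2 * l - j = Suc (Suc k)" "Suc (Suc k) \<le> l - 1"
      unfolding k_def using 3 by auto
    have "(4::nat) * 2 ^ k \<le> 2 ^ (l - 1)"
      using power_increasing[OF k(2), of "2::nat"] by simp
    then have "Suc (3 * 2 ^ (l - 1) - 2 * 2 ^ k - 1) - (3 * 2 ^ (l - 1) - 4 * 2 ^ k) = 2 * (2::nat) ^ k"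
      using nat_one_le_power[of 2 k] by linarith
    moreover have "tag_lo l j = 3 * 2 ^ (l - 1) - 4 * 2 ^ k" "tag_hi l j = 3 * 2 ^ (l - 1) - 2 * 2 ^ k - 1"
      "Bmux l j = 2 ^ k"
      using 3 k by (auto simp: tag_lo_def tag_hi_def Bmux_def)
    ultimately show ?thesis using 3 by simp
  qed
qed

lemma Bmux_Suc_bounds:
  assumes "1 \<le> j" "j < 2 * l - 1"
  shows "Bmux l (Suc j) \<le> 2 * Bmux l j" "Bmux l j \<le> 2 * Bmux l (Suc j)"
proof -
  consider "j = 1" | "2 \<le> j" "Suc j \<le> l" | "2 \<le> j" "l \<le> j" "Suc j = 2 * l - 1"
    | "2 \<le> j" "l \<le> j" "Suc j < 2 * l - 1"
    using assms by linarith
  then have "Bmux l (Suc j) \<le> 2 * Bmux l j \<and> Bmux l j \<le> 2 * Bmux l (Suc j)"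
  proof cases
    case 1
    then show ?thesis using assms by (simp add: Bmux_def)
  next
    case 2
    then show ?thesis using power2_eq_double_pred[of "j - 1"] by (simp add: Bmux_def numeral_2_eq_2)
  next
    case 3
    then show ?thesis by (simp add: Bmux_def)
  next
    case 4
    define e where "e = 2 * l - Suc j - 2"
    have e: "2 * l - j - 2 = Suc e" "2 * l - Suc j - 2 = e"
      unfolding e_def using 4 by auto
    have "Bmux l j = 2 ^ Suc e" "Bmux l (Suc j) = 2 ^ e"
      using 4 e by (auto simp: Bmux_def)
    then show ?thesis by simp
  qed
  then show "Bmux l (Suc j) \<le> 2 * Bmux l j" "Bmux l j \<le> 2 * Bmux l (Suc j)" by auto
qed

lemma Bmux_pos: "1 \<le> Bmux l j"
  by (simp add: Bmux_def)

lemma tag_lo_le_tag_hi: "1 \<le> j \<Longrightarrow> j \<le> 2 * l - 1 \<Longrightarrow> tag_lo l j \<le> tag_hi l j"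
  using group_width[of j l] Bmux_pos[of l j] by (auto split: if_splits)

lemma group_width_le: "1 \<le> j \<Longrightarrow> j \<le> 2 * l - 1 \<Longrightarrow> Suc (tag_hi l j) - tag_lo l j \<le> 2 * Bmux l j"
  using group_width[of j l] Bmux_pos[of l j] by auto

lemma Bmux_Suc_le_width:
  assumes "1 \<le> j" "j < 2 * l - 1"
  shows "Bmux l (Suc j) \<le> Suc (tag_hi l j) - tag_lo l j"
  using group_width[of j l] Bmux_Suc_bounds[OF assms] Bmux_eq_1[of "Suc j" l] assms by auto

lemma Bmux_le_width_Suc:
  assumes "1 \<le> j" "j < 2 * l - 1"
  shows "Bmux l j \<le> Suc (tag_hi l (Suc j)) - tag_lo l (Suc j)"
  using group_width[of "Suc j" l] Bmux_Suc_bounds[OF assms] assms by auto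

lemma tag_hi_less_tag_lo:
  assumes "1 \<le> j" "j < j'" "j' \<le> 2 * l - 1"
  shows "tag_hi l j < tag_lo l j'"
  using assms(2,3)
proof (induction j' rule: less_induct)
  case (less j')
  then obtain j0 where j0: "j' = Suc j0" "j \<le> j0" by (cases j') auto
  have "tag_hi l j \<le> tag_hi l j0"
    using less.IH[of j0] tag_lo_le_tag_hi[of j0 l] assms(1) j0 less.prems by (cases "j = j0") auto
  then show ?case using tag_lo_Suc[of j0 l] assms(1) j0 less.prems by auto
qed

lemma tag_lo_mono: "1 \<le> j \<Longrightarrow> j \<le> j' \<Longrightarrow> j' \<le> 2 * l - 1 \<Longrightarrow> tag_lo l j \<le> tag_lo l j'"
  using tag_hi_less_tag_lo[of j j' l] tag_lo_le_tag_hi[of j l] by (cases "j = j'") auto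

lemma Suc_Bmux_less_tag_lo:
  assumes "3 \<le> j" "j \<le> 2 * l - 1"
  shows "Suc (Bmux l j) < tag_lo l j"
proof -
  obtain j0 where j0: "j = Suc j0" "2 \<le> j0" using assms(1) by (cases j) auto
  have "tag_lo l 2 = 2" using assms j0 by (simp add: tag_lo_def)
  then have "2 \<le> tag_lo l j0" using tag_lo_mono[of 2 j0 l] assms j0 by auto
  moreover have "Bmux l j \<le> Suc (tag_hi l j0) - tag_lo l j0"
    using Bmux_Suc_le_width[of j0 l] assms j0 by auto
  moreover have "tag_lo l j = Suc (tag_hi l j0)" "tag_lo l j0 \<le> tag_hi l j0"
    using tag_lo_Suc[of j0 l] tag_lo_le_tag_hi[of j0 l] assms j0 by auto
  ultimately show ?thesis by linarith
qed

lemma tag_hi_add_Bmux_le: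
  assumes "1 \<le> j" "j < 2 * l - 1"
  shows "tag_hi l j + Bmux l j \<le> Bstar l"
proof (cases "Suc j = 2 * l - 1")
  case True
  then have "Bmux l j = 1" by (auto simp: Bmux_def)
  then show ?thesis using True tag_lo_Suc[OF assms] tag_lo_last[of l] assms by auto
next
  case False
  have "tag_hi l j + Bmux l j \<le> tag_hi l (Suc j)"
    using Bmux_le_width_Suc[OF assms] tag_lo_Suc[OF assms] tag_lo_le_tag_hi[of "Suc j" l] assms
    by linarith
  also have "\<dots> < tag_lo l (2 * l - 1)" using tag_hi_less_tag_lo[of "Suc j" "2 * l - 1" l] False assms by auto
  finally show ?thesis using tag_lo_last[of l] assms by auto
qed

lemma assigned_iff:
  assumes "1 \<le> j" "j \<le> 2 * l - 1" "k \<le> Bstar l + 1"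
  shows "assigned l k j \<longleftrightarrow> tag_lo l j \<le> k \<and> k \<le> tag_hi l j"
proof (cases "j = 2 * l - 1")
  case True
  then have "Psi l j = {tag_lo l j .. Bstar l}" "tag_hi l j = Bstar l + 1" "tag_lo l j \<le> Bstar l"
    using assms by (cases "l = 1"; auto simp: Psi_def tag_lo_def tag_hi_def Bstar_def)+
  then show ?thesis using True assms by (auto simp: assigned_def)
next
  case False
  then have "Psi l j = {tag_lo l j .. tag_hi l j}" by (simp add: Psi_def tag_lo_def tag_hi_def)
  then show ?thesis using False by (simp add: assigned_def)
qed

lemma group_of_tag_unique:
  assumes "1 \<le> j" "j \<le> 2 * l - 1" "1 \<le> j'" "j' \<le> 2 * l - 1"
    and "tag_lo l j \<le> k" "k \<le> tag_hi l j" "tag_lo l j' \<le> k" "k \<le> tag_hi l j'"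
  shows "j = j'"
  using assms tag_hi_less_tag_lo[of j j' l] tag_hi_less_tag_lo[of j' j l] by (cases j j' rule: linorder_cases) auto

lemma group_of_tag_exists:
  assumes "1 \<le> l" "1 \<le> k" "k \<le> Bstar l + 1"
  shows "\<exists>j. 1 \<le> j \<and> j \<le> 2 * l - 1 \<and> tag_lo l j \<le> k \<and> k \<le> tag_hi l j"
proof -
  have "\<exists>j\<in>{1..j'}. tag_lo l j \<le> k \<and> k \<le> tag_hi l j" if "1 \<le> j'" "j' \<le> 2 * l - 1" "k \<le> tag_hi l j'" for j'
    using that
  proof (induction j' rule: nat_induct_at_least)
    case base
    then show ?case using assms tag_lo_1 by auto
  next
    case (Suc j')
    then show ?case
      using tag_lo_Suc[of j' l] by (cases "k \<le> tag_hi l j'") (auto intro: bexI[of _ "Suc j'"])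
  qed
  moreover have "1 \<le> 2 * l - 1" "k \<le> tag_hi l (2 * l - 1)" using assms tag_hi_last[of l] by auto
  ultimately show ?thesis by fastforce
qed

lemma adjacent_groups:
  assumes "1 \<le> j" "j \<le> 2 * l - 1" "1 \<le> j'" "j' \<le> 2 * l - 1"
    and "tag_lo l j \<le> k" "k \<le> tag_hi l j" "tag_lo l j' \<le> k'" "k' \<le> tag_hi l j'"
    and "k \<le> k' + Bmux l j'" "k' \<le> k + Bmux l j'"
  shows "j \<le> Suc j'" "j' \<le> Suc j"
proof (rule ccontr)
  assume "\<not> j \<le> Suc j'"
  then have "tag_lo l (Suc (Suc j')) \<le> tag_lo l j" using tag_lo_mono assms by simp
  moreover have "tag_lo l (Suc (Suc j')) = Suc (tag_hi l (Suc j'))" "tag_lo l (Suc j') = Suc (tag_hi l j')"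
    "Bmux l j' \<le> Suc (tag_hi l (Suc j')) - tag_lo l (Suc j')" "tag_lo l (Suc j') \<le> tag_hi l (Suc j')"
    using tag_lo_Suc[of "Suc j'" l] tag_lo_Suc[of j' l] Bmux_le_width_Suc[of j' l]
      tag_lo_le_tag_hi[of "Suc j'" l] \<open>\<not> j \<le> Suc j'\<close> assms by auto
  ultimately show False using assms by linarith
next
  show "j' \<le> Suc j"
  proof (rule ccontr)
    assume "\<not> j' \<le> Suc j"
    then obtain j0 where j0: "j' = Suc j0" "Suc j \<le> j0" by (cases j') auto
    then have "tag_hi l j < tag_lo l j0" "tag_lo l j' = Suc (tag_hi l j0)"
      "Bmux l j' \<le> Suc (tag_hi l j0) - tag_lo l j0" "tag_lo l j0 \<le> tag_hi l j0"
      using tag_hi_less_tag_lo[of j j0 l] tag_lo_Suc[of j0 l] Bmux_Suc_le_width[of j0 l]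
        tag_lo_le_tag_hi[of j0 l] assms by auto
    then show False using assms by linarith
  qed
qed

section \<open>Round-robin balance\<close>

text \<open>\<open>v mod 3\<close> is the multiplexer that received the last packet; the next packets go to
  \<open>Suc v mod 3\<close>, \<open>Suc (Suc v) mod 3\<close>, \<open>v mod 3\<close>, \<open>Suc v mod 3\<close>, \<dots>\<close>
definition rr_balanced :: "(nat \<Rightarrow> nat) \<Rightarrow> nat \<Rightarrow> bool" where
  "rr_balanced b v \<longleftrightarrow>
     b (Suc v mod 3) \<le> b (Suc (Suc v) mod 3) \<and> b (Suc (Suc v) mod 3) \<le> b (v mod 3) \<and>
     b (v mod 3) \<le> b (Suc v mod 3) + 1"

lemma rr_balanced_Suc:
  assumes "rr_balanced b v"
  shows "rr_balanced (b (Suc v mod 3 := Suc (b (Suc v mod 3)))) (Suc v)"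
proof -
  have "v mod 3 = 0 \<or> v mod 3 = 1 \<or> v mod 3 = 2" by arith
  then show ?thesis using assms unfolding rr_balanced_def by (elim disjE) (simp_all add: mod_Suc numeral_2_eq_2)
qed

lemma rr_balanced_add:
  assumes "rr_balanced b v"
  shows "rr_balanced (\<lambda>m. b m + card {i. 1 \<le> i \<and> i \<le> k \<and> (v + i) mod 3 = m}) (v + k)"
proof (induction k)
  case 0
  have "(\<lambda>m. b m + card {i::nat. 1 \<le> i \<and> i \<le> 0 \<and> (v + i) mod 3 = m}) = b" by auto
  then show ?case using assms by simp
next
  case (Suc k)
  let ?c = "\<lambda>k m. card {i. 1 \<le> i \<and> i \<le> k \<and> (v + i) mod 3 = m}"
  have "{i. 1 \<le> i \<and> i \<le> Suc k \<and> (v + i) mod 3 = m} =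
      {i. 1 \<le> i \<and> i \<le> k \<and> (v + i) mod 3 = m} \<union> (if Suc (v + k) mod 3 = m then {Suc k} else {})" for m
    by (auto simp: le_Suc_eq)
  then have "(\<lambda>m. b m + ?c (Suc k) m) =
      (\<lambda>m. b m + ?c k m) (Suc (v + k) mod 3 := Suc (b (Suc (v + k) mod 3) + ?c k (Suc (v + k) mod 3)))"
    by (auto simp: fun_eq_iff)
  then show ?case using rr_balanced_Suc[OF Suc.IH] by simp
qed

lemma rr_balanced_cong: "(\<And>m. m < 3 \<Longrightarrow> b m = b' m) \<Longrightarrow> rr_balanced b v \<longleftrightarrow> rr_balanced b' v"
  by (simp add: rr_balanced_def)

lemma rr_balanced_mod_3:
  assumes "v mod 3 = w mod 3"
  shows "rr_balanced b v \<longleftrightarrow> rr_balanced b w"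
proof -
  have "Suc v mod 3 = Suc w mod 3" "Suc (Suc v) mod 3 = Suc (Suc w) mod 3"
    using assms by (metis mod_Suc_eq)+
  then show ?thesis using assms by (simp add: rr_balanced_def)
qed

lemma rr_balanced_le_Suc:
  assumes "rr_balanced b v" "m < 3" "m' < 3"
  shows "b m \<le> Suc (b m')"
proof -
  have "{m, m'} \<subseteq> {Suc v mod 3, Suc (Suc v) mod 3, v mod 3}" using assms(2,3) by (auto simp: mod_Suc)
  then show ?thesis using assms(1) unfolding rr_balanced_def by auto
qed

lemma rr_balanced_diff_1: "rr_balanced b v \<Longrightarrow> rr_balanced (\<lambda>m. b m - 1) v"
  unfolding rr_balanced_def by arith

lemma inj_on_add_mod: "inj_on (\<lambda>i. (u + i) mod N) {a..<a + N}" for u N a :: nat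
proof
  fix i i' assume "i \<in> {a..<a + N}" "i' \<in> {a..<a + N}" "(u + i) mod N = (u + i') mod N"
  moreover have False if less: "i < i'" "i \<in> {a..<a + N}" "i' \<in> {a..<a + N}"
    "(u + i) mod N = (u + i') mod N" for i i'
  proof -
    obtain s where "u + i' = u + i + N * s"
      by (rule mod_eq_nat2E[OF less(4)]) (use less(1) in auto)
    then show False using less by (cases s) auto
  qed
  ultimately show "i = i'" by (metis linorder_neqE_nat)
qed

section \<open>Ranks in a flow of prioritised packets\<close>

definition prio_rank :: "('a \<Rightarrow> 'p::linorder) \<Rightarrow> 'a set \<Rightarrow> 'a \<Rightarrow> nat" where
  "prio_rank prio A p = card {q \<in> A. prio p \<le> prio q}"

lemma card_filter_le_add_card_diff:
  assumes "finite A" "finite A'"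
  shows "card {q \<in> A'. P q} \<le> card {q \<in> A. P q} + card (A' - A)"
proof -
  have "{q \<in> A'. P q} \<subseteq> {q \<in> A. P q} \<union> (A' - A)" by auto
  then have "card {q \<in> A'. P q} \<le> card ({q \<in> A. P q} \<union> (A' - A))"
    using assms by (intro card_mono) auto
  also have "\<dots> \<le> card {q \<in> A. P q} + card (A' - A)" by (rule card_Un_le)
  finally show ?thesis .
qed

lemma prio_rank_pos: "finite A \<Longrightarrow> p \<in> A \<Longrightarrow> 1 \<le> prio_rank prio A p"
  by (auto simp: prio_rank_def Suc_le_eq card_gt_0_iff)

lemma prio_rank_le_card: "finite A \<Longrightarrow> prio_rank prio A p \<le> card A"
  unfolding prio_rank_def by (intro card_mono) auto

lemma prio_rank_max:
  assumes "inj_on prio A" "p \<in> A" "\<forall>q\<in>A. prio q \<le> prio p"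
  shows "prio_rank prio A p = 1"
proof -
  have "{q \<in> A. prio p \<le> prio q} = {p}"
    using assms by (auto dest: inj_onD intro: order.antisym)
  then show ?thesis by (simp add: prio_rank_def)
qed

lemma prio_rank_min: "\<forall>q\<in>A. prio p \<le> prio q \<Longrightarrow> prio_rank prio A p = card A"
  unfolding prio_rank_def by (rule arg_cong[where f = card]) auto

lemma card_prio_between:
  assumes "finite A" "inj_on prio A" "p' \<in> A" "prio p \<le> prio p'"
  shows "card {q \<in> A. prio p \<le> prio q \<and> prio q \<le> prio p'} + prio_rank prio A p' = prio_rank prio A p + 1"
proof -
  have "{q \<in> A. prio p \<le> prio q} = {q \<in> A. prio p \<le> prio q \<and> prio q \<le> prio p'} \<union> {q \<in> A. prio p' < prio q}"
    using assms(4) by auto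
  moreover have "{q \<in> A. prio p' \<le> prio q} = insert p' {q \<in> A. prio p' < prio q}"
    using assms(2,3) by (auto simp: less_le dest: inj_onD)
  moreover have "card ({q \<in> A. prio p \<le> prio q \<and> prio q \<le> prio p'} \<union> {q \<in> A. prio p' < prio q}) =
      card {q \<in> A. prio p \<le> prio q \<and> prio q \<le> prio p'} + card {q \<in> A. prio p' < prio q}"
    using assms(1) by (intro card_Un_disjoint) auto
  ultimately show ?thesis
    using assms(1) by (simp add: prio_rank_def)
qed

lemma ex_max_prio:
  fixes prio :: "'a \<Rightarrow> 'p::linorder"
  assumes "finite A" "A \<noteq> {}"
  shows "\<exists>p\<in>A. \<forall>q\<in>A. prio q \<le> prio p"
proof -
  have "Max (prio ` A) \<in> prio ` A" using assms by (intro Max_in) auto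
  then obtain p where "p \<in> A" "prio p = Max (prio ` A)" by auto
  then show ?thesis using assms(1) by (auto intro!: bexI[of _ p])
qed

lemma ex_min_prio:
  fixes prio :: "'a \<Rightarrow> 'p::linorder"
  assumes "finite A" "A \<noteq> {}"
  shows "\<exists>p\<in>A. \<forall>q\<in>A. prio p \<le> prio q"
proof -
  have "Min (prio ` A) \<in> prio ` A" using assms by (intro Min_in) auto
  then obtain p where "p \<in> A" "prio p = Min (prio ` A)" by auto
  then show ?thesis using assms(1) by (auto intro!: bexI[of _ p])
qed

text \<open>\<open>S z\<close> is the set of packets present in slot \<open>z\<close>, each named by its arrival time.\<close>
locale packet_flow =
  fixes S :: "nat \<Rightarrow> nat set" and prio :: "nat \<Rightarrow> 'p::linorder" and T :: nat
  assumes finite_S: "\<And>z. 1 \<le> z \<Longrightarrow> z \<le> T \<Longrightarrow> finite (S z)"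
    and S_atMost: "\<And>z. 1 \<le> z \<Longrightarrow> z \<le> T \<Longrightarrow> S z \<subseteq> {..z}"
    and inj_prio: "\<And>z. 1 \<le> z \<Longrightarrow> z \<le> T \<Longrightarrow> inj_on prio (S z)"
    and S_Suc_subset: "\<And>z. 1 \<le> z \<Longrightarrow> z < T \<Longrightarrow> S (Suc z) \<subseteq> insert (Suc z) (S z)"
    and card_leaving: "\<And>z. 1 \<le> z \<Longrightarrow> z < T \<Longrightarrow> card (S z - S (Suc z)) \<le> 1"
begin

lemma S_subset_arrivals:
  assumes "1 \<le> x" "x \<le> y" "y \<le> T"
  shows "S y \<subseteq> S x \<union> {x<..y}"
  using assms(2,3)
proof (induction y rule: nat_induct_at_least)
  case (Suc y)
  then have "insert (Suc y) (S y) \<subseteq> S x \<union> {x<..Suc y}" by auto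
  then show ?case using S_Suc_subset[of y] Suc assms(1) by (meson order_trans le_SucI Suc_le_eq)
qed simp

lemma card_arrivals:
  assumes "1 \<le> x" "x \<le> y" "y \<le> T"
  shows "card (S y - S x) \<le> y - x"
proof -
  have "card (S y - S x) \<le> card {x<..y}"
    using S_subset_arrivals[OF assms] by (intro card_mono) auto
  then show ?thesis by simp
qed

lemma card_departures:
  assumes "1 \<le> x" "x \<le> y" "y \<le> T"
  shows "card (S x - S y) \<le> y - x"
  using assms(2,3)
proof (induction y rule: nat_induct_at_least)
  case (Suc y)
  have "card (S x - S (Suc y)) \<le> card ((S x - S y) \<union> (S y - S (Suc y)))"
    using finite_S[of x] finite_S[of y] assms(1) Suc by (intro card_mono) auto
  also have "\<dots> \<le> card (S x - S y) + card (S y - S (Suc y))" by (rule card_Un_le)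
  finally show ?case using Suc card_leaving[of y] assms(1) by simp
qed simp

lemma mem_S_between:
  assumes "1 \<le> x" "x \<le> z" "z \<le> y" "y \<le> T" "p \<in> S x" "p \<in> S y"
  shows "p \<in> S z"
  using S_subset_arrivals[of z y] S_atMost[of x] assms by fastforce

lemma card_filter_S_increase:
  assumes "1 \<le> x" "x \<le> y" "y \<le> T"
  shows "card {q \<in> S y. P q} \<le> card {q \<in> S x. P q} + (y - x)"
  using card_filter_le_add_card_diff[of "S x" "S y" P] card_arrivals[OF assms] finite_S assms by force

lemma prio_rank_increase:
  "1 \<le> x \<Longrightarrow> x \<le> y \<Longrightarrow> y \<le> T \<Longrightarrow> prio_rank prio (S y) p \<le> prio_rank prio (S x) p + (y - x)"
  unfolding prio_rank_def by (rule card_filter_S_increase)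

lemma prio_rank_decrease:
  assumes "1 \<le> x" "x \<le> y" "y \<le> T"
  shows "prio_rank prio (S x) p \<le> prio_rank prio (S y) p + (y - x)"
  using card_filter_le_add_card_diff[of "S y" "S x" "\<lambda>q. prio p \<le> prio q"] card_departures[OF assms]
    finite_S assms unfolding prio_rank_def by force

lemma card_prio_between_le:
  assumes "y \<le> T" "1 \<le> s" "s \<le> y" "1 \<le> s'" "s' \<le> y"
    and "p \<in> S s" "p \<in> S y" "p' \<in> S s'" "p' \<in> S y" "prio p \<le> prio p'"
    and "prio_rank prio (S s) p \<le> hi" "lo \<le> prio_rank prio (S s') p'"
  shows "card {q \<in> S y. prio p \<le> prio q \<and> prio q \<le> prio p'} \<le> hi + 1 - lo + (y - min s s')"
proof -
  \<comment> \<open>Counting at \<open>max s s'\<close>, only one of the two packets' ranks has drifted since it was recorded.\<close>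
  define r where "r = max s s'"
  have r: "1 \<le> r" "s \<le> r" "s' \<le> r" "r \<le> y" using assms by (auto simp: r_def)
  have "p \<in> S r" "p' \<in> S r" using mem_S_between assms r by blast+
  then have "card {q \<in> S r. prio p \<le> prio q \<and> prio q \<le> prio p'} + prio_rank prio (S r) p' =
      prio_rank prio (S r) p + 1"
    using card_prio_between[OF finite_S[of r] inj_prio[of r]] r assms by simp
  moreover have "card {q \<in> S y. prio p \<le> prio q \<and> prio q \<le> prio p'} \<le>
      card {q \<in> S r. prio p \<le> prio q \<and> prio q \<le> prio p'} + (y - r)"
    using card_filter_S_increase r assms by simp
  moreover have "prio_rank prio (S r) p \<le> prio_rank prio (S s) p + (r - s)"
    "prio_rank prio (S s') p' \<le> prio_rank prio (S r) p' + (r - s')"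
    using prio_rank_increase prio_rank_decrease r assms by auto
  moreover have "(r - s) + (r - s') + (y - r) = y - min s s'" using r by (auto simp: r_def)
  ultimately show ?thesis using assms(11,12) by linarith
qed

end

definition sys_step :: "nat \<Rightarrow> (nat \<Rightarrow> bool) \<Rightarrow> (nat \<Rightarrow> 'p::linorder) \<Rightarrow> (nat \<Rightarrow> bool)
    \<Rightarrow> (nat \<Rightarrow> nat \<Rightarrow> nat \<Rightarrow> nat list) \<Rightarrow> (nat \<Rightarrow> nat \<Rightarrow> nat \<Rightarrow> nat option)
    \<Rightarrow> (nat \<Rightarrow> nat option) \<Rightarrow> (nat \<Rightarrow> nat option) \<Rightarrow> (nat \<Rightarrow> nat \<Rightarrow> nat \<Rightarrow> nat option)
    \<Rightarrow> (nat \<Rightarrow> nat \<Rightarrow> nat) \<Rightarrow> nat \<Rightarrow> bool" where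
  "sys_step l a prio c buf out dep loss route u n \<longleftrightarrow>
     (let t = Suc n;
          E = arr_set a t \<union> outs l out n (grps l);
          C1 = arr_set a t \<union> outs l out n {1, 2};
          C2 = arr_set a t \<union> outs l out n {2 * l - 1};
          tg = tag l a prio buf out t;
          R = (\<lambda>j. {p \<in> E - set_option (dep t) - set_option (loss t). assigned l (tg p) j})
      in
        (if c t \<and> C1 \<noteq> {}
         then (\<exists>p. dep t = Some p \<and> p \<in> C1 \<and> (\<forall>p' \<in> C1. prio p' \<le> prio p))
         else dep t = None) \<and>
        (if \<not> c t \<and> a t \<and> qsys l buf out n = Bstar l
         then (\<exists>p. loss t = Some p \<and> p \<in> C2 \<and> (\<forall>p' \<in> C2. prio p \<le> prio p'))
         else loss t = None) \<and>
        (\<forall>j \<in> grps l.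
           let k = card (R j);
               U = {(u t j + i) mod 12 | i. 1 \<le> i \<and> i \<le> k}
           in (\<forall>g < 12. route t j g \<noteq> None \<longleftrightarrow> g \<in> U) \<and>
              bij_betw (\<lambda>g. the (route t j g)) U (R j) \<and>
              u (Suc t) j = (u t j + k) mod 12) \<and>
        (\<forall>j \<in> grps l. \<forall>m < 3.
           \<exists>xs. distinct xs \<and>
                set xs = {p. \<exists>g < 12. g mod 3 = m \<and> route t j g = Some p} \<and>
                (let L = buf n j m @ xs in
                   out t j m = (if L = [] then None else Some (hd L)) \<and>
                   buf t j m \<in> set (subseqs (tl L)) \<and>
                   length (buf t j m) = min (Bmux l j) (length L - 1))))"

lemma sys_run_iff:
  "sys_run l a prio c buf out dep loss route u \<longleftrightarrow>
     (\<forall>j m. buf 0 j m = [] \<and> out 0 j m = None) \<and> (\<forall>j. u 1 j = 0) \<and>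
     (\<forall>n. sys_step l a prio c buf out dep loss route u n)"
  unfolding sys_run_def sys_step_def by (rule refl)

lemma grps_iff: "j \<in> grps l \<longleftrightarrow> 1 \<le> j \<and> j \<le> 2 * l - 1"
  by (simp add: grps_def)

text \<open>Only the first \<open>N\<close> steps of the run are assumed, so that the invariant below also applies
  to a run that is still under construction.\<close>
locale switch_run =
  fixes l :: nat and a c :: "nat \<Rightarrow> bool" and prio :: "nat \<Rightarrow> 'p::linorder"
    and buf :: "nat \<Rightarrow> nat \<Rightarrow> nat \<Rightarrow> nat list" and out :: "nat \<Rightarrow> nat \<Rightarrow> nat \<Rightarrow> nat option"
    and dep loss :: "nat \<Rightarrow> nat option" and route :: "nat \<Rightarrow> nat \<Rightarrow> nat \<Rightarrow> nat option"
    and u :: "nat \<Rightarrow> nat \<Rightarrow> nat" and N :: nat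
  assumes l_pos: "1 \<le> l" and inj_prio_arrivals: "inj_on prio {t. 0 < t \<and> a t}"
    and initial: "\<And>j m. buf 0 j m = [] \<and> out 0 j m = None" and u_1: "\<And>j. u 1 j = 0"
    and steps: "\<And>n. n < N \<Longrightarrow> sys_step l a prio c buf out dep loss route u n"
begin

abbreviation "Sto \<equiv> stored l buf out"
abbreviation "tg \<equiv> tag l a prio buf out"

definition present :: "nat \<Rightarrow> nat set" where
  "present t = Sto (t - 1) \<union> arr_set a t"

definition entering :: "nat \<Rightarrow> nat set" where
  "entering t = arr_set a t \<union> outs l out (t - 1) (grps l)"

definition dep_candidates :: "nat \<Rightarrow> nat set" where
  "dep_candidates t = arr_set a t \<union> outs l out (t - 1) {1, 2}"

definition loss_candidates :: "nat \<Rightarrow> nat set" where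
  "loss_candidates t = arr_set a t \<union> outs l out (t - 1) {2 * l - 1}"

definition routed :: "nat \<Rightarrow> nat \<Rightarrow> nat set" where
  "routed t j = {p \<in> entering t - set_option (dep t) - set_option (loss t). assigned l (tg t p) j}"

definition slots :: "nat \<Rightarrow> nat \<Rightarrow> nat set" where
  "slots t j = {(u t j + i) mod 12 | i. 1 \<le> i \<and> i \<le> card (routed t j)}"

definition mux_queue :: "nat \<Rightarrow> nat \<Rightarrow> nat \<Rightarrow> nat list" where
  "mux_queue n j m = (case out n j m of None \<Rightarrow> [] | Some p \<Rightarrow> [p]) @ buf n j m"

definition tag_in_range :: "nat \<Rightarrow> nat \<Rightarrow> nat \<Rightarrow> bool" where
  "tag_in_range j s p \<longleftrightarrow> p \<in> present s \<and> tag_lo l j \<le> tg s p \<and> tg s p \<le> tag_hi l j"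

lemma step:
  assumes "n < N"
  shows "if c (Suc n) \<and> dep_candidates (Suc n) \<noteq> {}
     then \<exists>p. dep (Suc n) = Some p \<and> p \<in> dep_candidates (Suc n) \<and>
       (\<forall>p' \<in> dep_candidates (Suc n). prio p' \<le> prio p)
     else dep (Suc n) = None"
  and "if \<not> c (Suc n) \<and> a (Suc n) \<and> card (Sto n) = Bstar l
     then \<exists>p. loss (Suc n) = Some p \<and> p \<in> loss_candidates (Suc n) \<and>
       (\<forall>p' \<in> loss_candidates (Suc n). prio p \<le> prio p')
     else loss (Suc n) = None"
  and "\<And>j. j \<in> grps l \<Longrightarrow> (\<forall>g<12. route (Suc n) j g \<noteq> None \<longleftrightarrow> g \<in> slots (Suc n) j) \<and>
     bij_betw (\<lambda>g. the (route (Suc n) j g)) (slots (Suc n) j) (routed (Suc n) j) \<and>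
     u (Suc (Suc n)) j = (u (Suc n) j + card (routed (Suc n) j)) mod 12"
  and "\<And>j m. j \<in> grps l \<Longrightarrow> m < 3 \<Longrightarrow> \<exists>xs. distinct xs \<and>
     set xs = {p. \<exists>g<12. g mod 3 = m \<and> route (Suc n) j g = Some p} \<and>
     out (Suc n) j m = (if buf n j m @ xs = [] then None else Some (hd (buf n j m @ xs))) \<and>
     buf (Suc n) j m \<in> set (subseqs (tl (buf n j m @ xs))) \<and>
     length (buf (Suc n) j m) = min (Bmux l j) (length (buf n j m @ xs) - 1)"
proof -
  have e: "entering (Suc n) = arr_set a (Suc n) \<union> outs l out n (grps l)"
    "dep_candidates (Suc n) = arr_set a (Suc n) \<union> outs l out n {1, 2}"
    "loss_candidates (Suc n) = arr_set a (Suc n) \<union> outs l out n {2 * l - 1}"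
    "\<And>j. routed (Suc n) j = {p \<in> entering (Suc n) - set_option (dep (Suc n)) - set_option (loss (Suc n)).
        assigned l (tg (Suc n) p) j}"
    "\<And>j. slots (Suc n) j = {(u (Suc n) j + i) mod 12 | i. 1 \<le> i \<and> i \<le> card (routed (Suc n) j)}"
    "card (Sto n) = qsys l buf out n"
    by (simp_all add: entering_def dep_candidates_def loss_candidates_def routed_def slots_def qsys_def)
  note s = steps[OF assms, unfolded sys_step_def Let_def, folded e]
  show "if c (Suc n) \<and> dep_candidates (Suc n) \<noteq> {}
     then \<exists>p. dep (Suc n) = Some p \<and> p \<in> dep_candidates (Suc n) \<and>
       (\<forall>p' \<in> dep_candidates (Suc n). prio p' \<le> prio p)
     else dep (Suc n) = None"
    using s by (elim conjE)
  show "if \<not> c (Suc n) \<and> a (Suc n) \<and> card (Sto n) = Bstar l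
     then \<exists>p. loss (Suc n) = Some p \<and> p \<in> loss_candidates (Suc n) \<and>
       (\<forall>p' \<in> loss_candidates (Suc n). prio p \<le> prio p')
     else loss (Suc n) = None"
    using s by (elim conjE)
  show "\<And>j. j \<in> grps l \<Longrightarrow> (\<forall>g<12. route (Suc n) j g \<noteq> None \<longleftrightarrow> g \<in> slots (Suc n) j) \<and>
     bij_betw (\<lambda>g. the (route (Suc n) j g)) (slots (Suc n) j) (routed (Suc n) j) \<and>
     u (Suc (Suc n)) j = (u (Suc n) j + card (routed (Suc n) j)) mod 12"
    using s unfolding slots_def routed_def by blast
  show "\<And>j m. j \<in> grps l \<Longrightarrow> m < 3 \<Longrightarrow> \<exists>xs. distinct xs \<and>
     set xs = {p. \<exists>g<12. g mod 3 = m \<and> route (Suc n) j g = Some p} \<and>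
     out (Suc n) j m = (if buf n j m @ xs = [] then None else Some (hd (buf n j m @ xs))) \<and>
     buf (Suc n) j m \<in> set (subseqs (tl (buf n j m @ xs))) \<and>
     length (buf (Suc n) j m) = min (Bmux l j) (length (buf n j m @ xs) - 1)"
    using s by (elim conjE) blast
qed

lemma stored_eq_mux_queues: "Sto n = (\<Union>j\<in>grps l. \<Union>m\<in>{..<3}. set (mux_queue n j m))"
  by (auto simp: stored_def outs_def mux_queue_def split: option.splits) (metis lessThan_iff)+

lemma tag_eq_prio_rank: "tg t p = prio_rank prio (present t) p"
  by (simp add: tag_def prio_rank_def present_def)

lemma present_Suc: "present (Suc n) = Sto n \<union> arr_set a (Suc n)"
  by (simp add: present_def)

lemma outs_subset_stored: "outs l out n J \<subseteq> Sto n"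
  by (auto simp: stored_def outs_def)

lemma candidates_subset:
  "dep_candidates t \<subseteq> entering t" "loss_candidates t \<subseteq> entering t" "entering t \<subseteq> present t"
  using outs_subset_stored[of "t - 1"]
  by (auto simp: dep_candidates_def loss_candidates_def entering_def present_def outs_def)

section \<open>The invariant\<close>

definition slot_ok :: "nat \<Rightarrow> bool" where
  "slot_ok x \<longleftrightarrow> finite (Sto (x - 1)) \<and> Sto (x - 1) \<subseteq> {p. 0 < p \<and> p < x \<and> a p} \<and>
     Sto x = present x - set_option (dep x) - set_option (loss x) \<and> (dep x = None \<or> loss x = None) \<and>
     (\<forall>p. dep x = Some p \<longrightarrow> p \<in> present x \<and> (\<forall>q\<in>present x. prio q \<le> prio p)) \<and>
     (\<forall>p. loss x = Some p \<longrightarrow> p \<in> present x \<and> (\<forall>q\<in>present x. prio p \<le> prio q)) \<and>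
     (dep x \<noteq> None \<longleftrightarrow> c x \<and> present x \<noteq> {}) \<and>
     (loss x \<noteq> None \<longleftrightarrow> \<not> c x \<and> a x \<and> card (Sto (x - 1)) = Bstar l)"

lemma card_present:
  assumes "1 \<le> x" "finite (Sto (x - 1))" "Sto (x - 1) \<subseteq> {p. p < x}"
  shows "card (present x) = card (Sto (x - 1)) + of_bool (a x)"
proof -
  have "x \<notin> Sto (x - 1)" using assms(3) by auto
  then show ?thesis using assms(2) by (simp add: present_def arr_set_def)
qed

lemma slot_okD:
  assumes "slot_ok x"
  shows "finite (Sto (x - 1))" "Sto (x - 1) \<subseteq> {p. 0 < p \<and> p < x \<and> a p}"
    "Sto x = present x - set_option (dep x) - set_option (loss x)" "dep x = None \<or> loss x = None"
    "dep x = Some p \<Longrightarrow> p \<in> present x \<and> (\<forall>q\<in>present x. prio q \<le> prio p)"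
    "loss x = Some p \<Longrightarrow> p \<in> present x \<and> (\<forall>q\<in>present x. prio p \<le> prio q)"
    "dep x \<noteq> None \<longleftrightarrow> c x \<and> present x \<noteq> {}"
    "loss x \<noteq> None \<longleftrightarrow> \<not> c x \<and> a x \<and> card (Sto (x - 1)) = Bstar l"
  using assms unfolding slot_ok_def by blast+

lemma card_stored_slot:
  assumes "slot_ok x"
  shows "card (Sto x) + of_bool (dep x \<noteq> None) + of_bool (loss x \<noteq> None) = card (present x)"
proof -
  note ok = slot_okD[OF assms]
  have fin: "finite (present x)" using ok(1) by (simp add: present_def arr_set_def)
  show ?thesis
  proof (cases "dep x = None \<and> loss x = None")
    case False
    then obtain p where p: "set_option (dep x) \<union> set_option (loss x) = {p}"
      "of_bool (dep x \<noteq> None) + of_bool (loss x \<noteq> None) = (1::nat)"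
      using ok(4) by auto
    then have "Sto x = present x - {p}" "p \<in> present x"
      using ok(3,5,6) by (auto simp: Diff_eq)
    then show ?thesis using p(2) card_Suc_Diff1[OF fin, of p] by simp
  qed (use ok(3) in simp)
qed

lemma slot_ok_imp_pq:
  assumes "1 \<le> x" "slot_ok x"
  shows "int (card (Sto x)) = int (card (Sto (x - 1))) + of_bool (a x) - of_bool (dep x \<noteq> None)
           - of_bool (loss x \<noteq> None)"
    and "dep x \<noteq> None \<longleftrightarrow> c x \<and> card (Sto (x - 1)) + of_bool (a x) > 0"
    and "loss x \<noteq> None \<longleftrightarrow> \<not> c x \<and> card (Sto (x - 1)) = Bstar l \<and> a x"
    and "dep x = Some i \<Longrightarrow> tg x i = 1"
    and "loss x = Some i \<Longrightarrow> tg x i = Bstar l + 1"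
proof -
  note ok = slot_okD[OF assms(2)]
  have fin: "finite (present x)" using ok(1) by (simp add: present_def arr_set_def)
  have card: "card (present x) = card (Sto (x - 1)) + of_bool (a x)"
    using ok(1,2) by (intro card_present[OF assms(1)]) auto
  from arg_cong[OF card_stored_slot[OF assms(2), unfolded card], of int]
  show "int (card (Sto x)) = int (card (Sto (x - 1))) + of_bool (a x) - of_bool (dep x \<noteq> None)
           - of_bool (loss x \<noteq> None)"
    by simp
  have "present x \<noteq> {} \<longleftrightarrow> 0 < card (present x)" using fin by auto
  then show "dep x \<noteq> None \<longleftrightarrow> c x \<and> card (Sto (x - 1)) + of_bool (a x) > 0"
    using ok(7) card by simp
  show "loss x \<noteq> None \<longleftrightarrow> \<not> c x \<and> card (Sto (x - 1)) = Bstar l \<and> a x"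
    using ok(8) by auto
  have "present x \<subseteq> {t. 0 < t \<and> a t}" using ok(2) assms(1) by (auto simp: present_def arr_set_def)
  then have inj: "inj_on prio (present x)" by (rule inj_on_subset[OF inj_prio_arrivals])
  show "tg x i = 1" if "dep x = Some i"
    using ok(5)[OF that] prio_rank_max[OF inj] by (simp add: tag_eq_prio_rank)
  show "tg x i = Bstar l + 1" if "loss x = Some i"
    using ok(6)[OF that] ok(8) that card prio_rank_min[of "present x" prio i] by (simp add: tag_eq_prio_rank)
qed

text \<open>The packet at position \<open>i\<close> of a multiplexer queue reaches the switch at time \<open>n + i\<close>; it
  entered the group at some time \<open>s\<close> with a tag in the group's range, and \<open>n + i - s < Bmux l j\<close>.\<close>
definition run_inv :: "nat \<Rightarrow> bool" where
  "run_inv n \<longleftrightarrow> (\<forall>x\<in>{1..n}. slot_ok x) \<and>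
     finite (Sto n) \<and> Sto n \<subseteq> {p. 0 < p \<and> p \<le> n \<and> a p} \<and> card (Sto n) \<le> Bstar l \<and>
     (\<forall>j\<in>grps l. \<forall>m<3. distinct (mux_queue n j m) \<and> length (mux_queue n j m) \<le> Bmux l j \<and>
        (out n j m = None \<longrightarrow> buf n j m = [])) \<and>
     (\<forall>j\<in>grps l. \<forall>m<3. \<forall>j'\<in>grps l. \<forall>m'<3. (j, m) \<noteq> (j', m') \<longrightarrow>
        set (mux_queue n j m) \<inter> set (mux_queue n j' m') = {}) \<and>
     (\<forall>j\<in>grps l. \<forall>m<3. \<forall>i<length (mux_queue n j m).
        \<exists>s\<in>{1..n}. i + (n - s) < Bmux l j \<and> tag_in_range j s (mux_queue n j m ! i)) \<and>
     (\<forall>j\<in>grps l. rr_balanced (\<lambda>m. length (buf n j m)) (u (Suc n) j))"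

end

locale switch_run_at = switch_run +
  fixes n :: nat
  assumes run_inv: "run_inv n"
begin

abbreviation "t \<equiv> Suc n"

lemma run_invD:
  "\<And>x. 1 \<le> x \<Longrightarrow> x \<le> n \<Longrightarrow> slot_ok x"
  "finite (Sto n)" "Sto n \<subseteq> {p. 0 < p \<and> p \<le> n \<and> a p}" "card (Sto n) \<le> Bstar l"
  "\<And>j m. j \<in> grps l \<Longrightarrow> m < 3 \<Longrightarrow> distinct (mux_queue n j m)"
  "\<And>j m. j \<in> grps l \<Longrightarrow> m < 3 \<Longrightarrow> length (mux_queue n j m) \<le> Bmux l j"
  "\<And>j m. j \<in> grps l \<Longrightarrow> m < 3 \<Longrightarrow> out n j m = None \<Longrightarrow> buf n j m = []"
  "\<And>j m j' m'. j \<in> grps l \<Longrightarrow> m < 3 \<Longrightarrow> j' \<in> grps l \<Longrightarrow> m' < 3 \<Longrightarrow> (j, m) \<noteq> (j', m') \<Longrightarrow>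
     set (mux_queue n j m) \<inter> set (mux_queue n j' m') = {}"
  "\<And>j m i. j \<in> grps l \<Longrightarrow> m < 3 \<Longrightarrow> i < length (mux_queue n j m) \<Longrightarrow>
     \<exists>s\<in>{1..n}. i + (n - s) < Bmux l j \<and> tag_in_range j s (mux_queue n j m ! i)"
  "\<And>j. j \<in> grps l \<Longrightarrow> rr_balanced (\<lambda>m. length (buf n j m)) (u t j)"
  using run_inv unfolding run_inv_def by (simp_all add: Ball_def)

lemma present_bounds:
  assumes "1 \<le> x" "x \<le> t"
  shows "finite (present x)" "present x \<subseteq> {p. 0 < p \<and> p \<le> x \<and> a p}"
proof -
  have "finite (Sto (x - 1)) \<and> Sto (x - 1) \<subseteq> {p. 0 < p \<and> p < x \<and> a p}"
  proof (cases "x = t")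
    case True
    then show ?thesis using run_invD(2,3) by auto
  next
    case False
    then show ?thesis using slot_okD(1,2)[OF run_invD(1)[of x]] assms by simp
  qed
  then show "finite (present x)" "present x \<subseteq> {p. 0 < p \<and> p \<le> x \<and> a p}"
    using assms(1) by (auto simp: present_def arr_set_def)
qed

sublocale flow: packet_flow present prio t
proof
  fix z assume z: "1 \<le> z" "z \<le> t"
  show "finite (present z)" "present z \<subseteq> {..z}" using present_bounds[OF z] by auto
  have "present z \<subseteq> {t. 0 < t \<and> a t}" using present_bounds[OF z] by auto
  then show "inj_on prio (present z)" by (rule inj_on_subset[OF inj_prio_arrivals])
next
  fix z assume z: "1 \<le> z" "z < t"
  then have sto: "Sto z = present z - set_option (dep z) - set_option (loss z)"
    and excl: "dep z = None \<or> loss z = None"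
    using slot_okD(3,4)[OF run_invD(1)[of z]] by simp_all
  then show "present (Suc z) \<subseteq> insert (Suc z) (present z)"
    by (auto simp: present_Suc arr_set_def)
  have "present z - present (Suc z) \<subseteq> set_option (dep z) \<union> set_option (loss z)"
    using sto by (auto simp: present_Suc)
  then have "card (present z - present (Suc z)) \<le> card (set_option (dep z) \<union> set_option (loss z))"
    by (intro card_mono) auto
  with excl show "card (present z - present (Suc z)) \<le> 1"
    by (cases "dep z"; cases "loss z") auto
qed

lemma card_present_t: "card (present t) = card (Sto n) + of_bool (a t)"
proof -
  have "Sto n \<subseteq> {p. p < t}" using run_invD(3) by auto
  then show ?thesis using card_present[of t] run_invD(2) by simp
qed

lemma card_present_t_le: "card (present t) \<le> Bstar l + 1"
  using card_present_t run_invD(4) by simp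

lemma tag_t_bounds: "p \<in> present t \<Longrightarrow> 1 \<le> tg t p" "tg t p \<le> Bstar l + 1"
  using prio_rank_pos[OF flow.finite_S[of t]] prio_rank_le_card[OF flow.finite_S[of t], of prio p]
    card_present_t_le by (auto simp: tag_eq_prio_rank)

lemma buf_eq_tl_mux_queue: "j \<in> grps l \<Longrightarrow> m < 3 \<Longrightarrow> buf n j m = tl (mux_queue n j m)"
  using run_invD(7) by (cases "out n j m") (auto simp: mux_queue_def)

lemma out_eq_hd_mux_queue:
  "j \<in> grps l \<Longrightarrow> m < 3 \<Longrightarrow> mux_queue n j m \<noteq> [] \<Longrightarrow> out n j m = Some (hd (mux_queue n j m))"
  using run_invD(7) by (cases "out n j m") (auto simp: mux_queue_def)

lemma mem_stored_E:
  assumes "p \<in> Sto n"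
  obtains j m i where "j \<in> grps l" "m < 3" "i < length (mux_queue n j m)" "mux_queue n j m ! i = p"
  using assms unfolding stored_eq_mux_queues by (auto simp: in_set_conv_nth)

lemma stored_packet_witness:
  assumes "p \<in> Sto n"
  shows "\<exists>j\<in>grps l. \<exists>m<3. \<exists>i s. 1 \<le> s \<and> s \<le> n \<and> i + (n - s) < Bmux l j \<and>
    tag_in_range j s p \<and> (i = 0 \<longrightarrow> out n j m = Some p)"
proof -
  obtain j m i where jm: "j \<in> grps l" "m < 3" "i < length (mux_queue n j m)" "mux_queue n j m ! i = p"
    using assms by (rule mem_stored_E)
  moreover obtain s where "s \<in> {1..n}" "i + (n - s) < Bmux l j" "tag_in_range j s p"
    using run_invD(9)[OF jm(1-3)] jm(4) by auto
  moreover have "i = 0 \<longrightarrow> out n j m = Some p"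
    using out_eq_hd_mux_queue[OF jm(1,2)] jm(3,4) by (auto simp: hd_conv_nth)
  ultimately show ?thesis by fastforce
qed

lemma top_packet_in_dep_candidates:
  assumes "p \<in> present t" "\<forall>q\<in>present t. prio q \<le> prio p"
  shows "p \<in> dep_candidates t"
proof (cases "p \<in> arr_set a t")
  case False
  then have "p \<in> Sto n" using assms(1) by (auto simp: present_Suc)
  then obtain j m i s where w: "j \<in> grps l" "m < 3" "1 \<le> s" "s \<le> n" "i + (n - s) < Bmux l j"
    "tag_in_range j s p" "i = 0 \<Longrightarrow> out n j m = Some p"
    using stored_packet_witness by metis
  have "tg s p \<le> tg t p + (t - s)"
    using flow.prio_rank_decrease[of s t p] w by (simp add: tag_eq_prio_rank)
  moreover have "tg t p = 1"
    using prio_rank_max[OF flow.inj_prio assms] by (simp add: tag_eq_prio_rank)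
  ultimately have "tag_lo l j \<le> Suc (Bmux l j) - i" using w(3-6) by (auto simp: tag_in_range_def)
  then have "j \<in> {1, 2}" using Suc_Bmux_less_tag_lo[of j l] w(1) by (force simp: grps_iff)
  then have "i = 0" using w(5) Bmux_eq_1[of j l] by auto
  then show ?thesis using w(1,2,7) \<open>j \<in> {1, 2}\<close> by (auto simp: dep_candidates_def outs_def)
qed (simp add: dep_candidates_def)

lemma bottom_packet_in_loss_candidates:
  assumes "p \<in> present t" "\<forall>q\<in>present t. prio p \<le> prio q" "card (present t) = Bstar l + 1"
  shows "p \<in> loss_candidates t"
proof (cases "p \<in> arr_set a t")
  case False
  then have "p \<in> Sto n" using assms(1) by (auto simp: present_Suc)
  then obtain j m i s where w: "j \<in> grps l" "m < 3" "1 \<le> s" "s \<le> n" "i + (n - s) < Bmux l j"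
    "tag_in_range j s p" "i = 0 \<Longrightarrow> out n j m = Some p"
    using stored_packet_witness by metis
  have "tg t p \<le> tg s p + (t - s)"
    using flow.prio_rank_increase[of s t p] w by (simp add: tag_eq_prio_rank)
  moreover have "tg t p = Bstar l + 1"
    using prio_rank_min[OF assms(2)] assms(3) by (simp add: tag_eq_prio_rank)
  ultimately have "Bstar l < tag_hi l j + Bmux l j" using w(3-6) by (auto simp: tag_in_range_def)
  then have "j = 2 * l - 1" using tag_hi_add_Bmux_le[of j l] w(1) by (force simp: grps_iff)
  then have "i = 0" using w(5) Bmux_eq_1[of j l] by auto
  then show ?thesis using w(1,2,7) \<open>j = 2 * l - 1\<close> by (auto simp: loss_candidates_def outs_def)
qed (simp add: loss_candidates_def)

lemma finite_group_outs: "finite {p. \<exists>m<3. out n j m = Some p}"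
  by (rule finite_subset[of _ "(\<lambda>m. the (out n j m)) ` {..<3}"]) force+

lemma card_group_outs_le: "card {p. \<exists>m<3. out n j m = Some p} \<le> 3"
proof -
  have "{p. \<exists>m<3. out n j m = Some p} \<subseteq> (\<lambda>m. the (out n j m)) ` {..<3}" by force
  then have "card {p. \<exists>m<3. out n j m = Some p} \<le> card ((\<lambda>m. the (out n j m)) ` {..<3::nat})"
    by (intro card_mono) auto
  also have "\<dots> \<le> 3" using card_image_le[of "{..<3::nat}"] by simp
  finally show ?thesis .
qed

text \<open>A packet leaving group \<open>j'\<close> entered it less than \<open>Bmux l j'\<close> slots ago, and tags drift by at
  most one per slot, so it can only be assigned to a neighbouring group.\<close>
lemma card_entering_assigned_le:
  assumes j: "j \<in> grps l"
  shows "card {p \<in> entering t. assigned l (tg t p) j} \<le> 10"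
proof -
  define outs_of where "outs_of j' = {p. \<exists>m<3. out n j' m = Some p}" for j'
  have "{p \<in> entering t. assigned l (tg t p) j} \<subseteq>
      arr_set a t \<union> outs_of (j - 1) \<union> outs_of j \<union> outs_of (Suc j)"
  proof
    fix p assume p: "p \<in> {p \<in> entering t. assigned l (tg t p) j}"
    have k: "tag_lo l j \<le> tg t p" "tg t p \<le> tag_hi l j"
      using p assigned_iff[of j l "tg t p"] tag_t_bounds(2) j by (auto simp: grps_iff)
    show "p \<in> arr_set a t \<union> outs_of (j - 1) \<union> outs_of j \<union> outs_of (Suc j)"
    proof (cases "p \<in> arr_set a t")
      case False
      then obtain j' m where jm: "j' \<in> grps l" "m < 3" "out n j' m = Some p"
        using p by (auto simp: entering_def outs_def)
      then have "0 < length (mux_queue n j' m)" "mux_queue n j' m ! 0 = p" by (auto simp: mux_queue_def)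
      then obtain s where s: "s \<in> {1..n}" "n - s < Bmux l j'" "tag_in_range j' s p"
        using run_invD(9)[OF jm(1,2)] by fastforce
      have "tg t p \<le> tg s p + (t - s)" "tg s p \<le> tg t p + (t - s)"
        using flow.prio_rank_increase[of s t p] flow.prio_rank_decrease[of s t p] s
        by (auto simp: tag_eq_prio_rank)
      then have "j \<le> Suc j'" "j' \<le> Suc j"
        using adjacent_groups[of j l j' "tg t p" "tg s p"] j jm(1) k s by (auto simp: grps_iff tag_in_range_def)
      then have "j' \<in> {j - 1, j, Suc j}" by auto
      then show ?thesis using jm by (auto simp: outs_of_def)
    qed simp
  qed
  then have "card {p \<in> entering t. assigned l (tg t p) j} \<le>
      card (arr_set a t \<union> outs_of (j - 1) \<union> outs_of j \<union> outs_of (Suc j))"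
    using finite_group_outs by (intro card_mono) (auto simp: outs_of_def arr_set_def)
  also have "\<dots> \<le> card (arr_set a t) + card (outs_of (j - 1)) + card (outs_of j) + card (outs_of (Suc j))"
    by (meson add_le_mono card_Un_le le_refl order_trans)
  also have "\<dots> \<le> 10"
    using card_group_outs_le[of "j - 1"] card_group_outs_le[of j] card_group_outs_le[of "Suc j"]
    by (simp add: outs_of_def arr_set_def)
  finally show ?thesis .
qed

end

locale switch_run_step = switch_run_at +
  assumes n_less: "n < N"
begin

lemma dep_t:
  shows "dep t \<noteq> None \<longleftrightarrow> c t \<and> present t \<noteq> {}"
    and "dep t = Some p \<Longrightarrow> p \<in> entering t \<and> (\<forall>q\<in>present t. prio q \<le> prio p)"
proof -
  note rule = step(1)[OF n_less]
  have top: "\<exists>q\<in>dep_candidates t. \<forall>q'\<in>present t. prio q' \<le> prio q" if ne: "present t \<noteq> {}"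
  proof -
    from ex_max_prio[where prio = prio, OF flow.finite_S[of t] ne]
    obtain q where "q \<in> present t" "\<forall>q'\<in>present t. prio q' \<le> prio q" by auto
    then show ?thesis using top_packet_in_dep_candidates by auto
  qed
  show "dep t \<noteq> None \<longleftrightarrow> c t \<and> present t \<noteq> {}"
  proof (cases "c t \<and> dep_candidates t \<noteq> {}")
    case True
    then have "dep t \<noteq> None" using rule by auto
    moreover have "present t \<noteq> {}" using True candidates_subset(1,3)[of t] by blast
    ultimately show ?thesis using True by simp
  next
    case False
    then have "dep t = None" using rule by simp
    moreover have "\<not> (c t \<and> present t \<noteq> {})" using False top by blast
    ultimately show ?thesis by simp
  qed
  assume p: "dep t = Some p"
  then have "c t \<and> dep_candidates t \<noteq> {}" using rule by (cases "c t \<and> dep_candidates t \<noteq> {}") simp_all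
  then have pc: "p \<in> dep_candidates t" "\<forall>q\<in>dep_candidates t. prio q \<le> prio p"
    using rule p by auto
  then obtain q where "q \<in> dep_candidates t" "\<forall>q'\<in>present t. prio q' \<le> prio q"
    using top candidates_subset(1,3)[of t] by blast
  then show "p \<in> entering t \<and> (\<forall>q\<in>present t. prio q \<le> prio p)"
    using pc candidates_subset(1)[of t] by (blast intro: order.trans)
qed

lemma loss_t:
  shows "loss t \<noteq> None \<longleftrightarrow> \<not> c t \<and> a t \<and> card (Sto n) = Bstar l"
    and "loss t = Some p \<Longrightarrow> p \<in> entering t \<and> (\<forall>q\<in>present t. prio p \<le> prio q)"
proof -
  note rule = step(2)[OF n_less]
  show "loss t \<noteq> None \<longleftrightarrow> \<not> c t \<and> a t \<and> card (Sto n) = Bstar l"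
    using rule by (cases "\<not> c t \<and> a t \<and> card (Sto n) = Bstar l") auto
  assume p: "loss t = Some p"
  then have cond: "\<not> c t \<and> a t \<and> card (Sto n) = Bstar l"
    using rule by (cases "\<not> c t \<and> a t \<and> card (Sto n) = Bstar l") simp_all
  then have pc: "p \<in> loss_candidates t" "\<forall>q\<in>loss_candidates t. prio p \<le> prio q"
    using rule p by auto
  have full: "card (present t) = Bstar l + 1" using cond card_present_t by simp
  then have "present t \<noteq> {}" by auto
  from ex_min_prio[where prio = prio, OF flow.finite_S[of t] this]
  obtain q where q: "q \<in> present t" "\<forall>q'\<in>present t. prio q \<le> prio q'" by auto
  then have "q \<in> loss_candidates t" using bottom_packet_in_loss_candidates full by blast
  then show "p \<in> entering t \<and> (\<forall>q\<in>present t. prio p \<le> prio q)"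
    using pc q candidates_subset(2)[of t] by (blast intro: order.trans)
qed

lemma dep_or_loss_None: "dep t = None \<or> loss t = None"
  using dep_t(1) loss_t(1) by auto

lemma routed_eq:
  assumes "j \<in> grps l"
  shows "routed t j = {p \<in> entering t - set_option (dep t) - set_option (loss t).
    tag_lo l j \<le> tg t p \<and> tg t p \<le> tag_hi l j}"
  using assigned_iff[of j l] tag_t_bounds(2) assms by (auto simp: routed_def grps_iff)

lemma routed_disjoint: "j \<in> grps l \<Longrightarrow> j' \<in> grps l \<Longrightarrow> j \<noteq> j' \<Longrightarrow> routed t j \<inter> routed t j' = {}"
  using routed_eq group_of_tag_unique by (fastforce simp: grps_iff)

lemma routed_Union: "(\<Union>j\<in>grps l. routed t j) = entering t - set_option (dep t) - set_option (loss t)"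
proof
  show "entering t - set_option (dep t) - set_option (loss t) \<subseteq> (\<Union>j\<in>grps l. routed t j)"
  proof
    fix p assume p: "p \<in> entering t - set_option (dep t) - set_option (loss t)"
    then have "1 \<le> tg t p" "tg t p \<le> Bstar l + 1"
      using tag_t_bounds candidates_subset(3) by auto
    then obtain j where "1 \<le> j \<and> j \<le> 2 * l - 1 \<and> tag_lo l j \<le> tg t p \<and> tg t p \<le> tag_hi l j"
      using group_of_tag_exists[OF l_pos] by blast
    then show "p \<in> (\<Union>j\<in>grps l. routed t j)" using p routed_eq by (auto simp: grps_iff)
  qed
qed (auto simp: routed_def)

lemma buf_entering_disjoint:
  assumes "j \<in> grps l" "m < 3"
  shows "set (buf n j m) \<inter> entering t = {}"
proof -
  have "p \<notin> entering t" if p: "p \<in> set (buf n j m)" for p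
  proof
    assume "p \<in> entering t"
    moreover have "p \<in> Sto n" using p assms by (auto simp: stored_def)
    ultimately obtain j' m' where jm': "j' \<in> grps l" "m' < 3" "out n j' m' = Some p"
      using run_invD(3) by (auto simp: entering_def outs_def arr_set_def split: if_splits)
    obtain i where i: "Suc i < length (mux_queue n j m)" "mux_queue n j m ! Suc i = p"
      using p buf_eq_tl_mux_queue[OF assms] by (cases "mux_queue n j m") (auto simp: in_set_conv_nth)
    have "mux_queue n j' m' ! 0 = p" "0 < length (mux_queue n j' m')" using jm' by (auto simp: mux_queue_def)
    then show False
      using run_invD(5)[OF assms] run_invD(8)[OF assms jm'(1,2)] i nth_eq_iff_index_eq
      by (cases "(j, m) = (j', m')") (fastforce simp: disjoint_iff in_set_conv_nth)+
  qed
  then show ?thesis by auto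
qed

definition mux_input :: "nat \<Rightarrow> nat \<Rightarrow> nat list" where
  "mux_input j m = (SOME xs. distinct xs \<and> set xs = {p. \<exists>g<12. g mod 3 = m \<and> route t j g = Some p} \<and>
     out t j m = (if buf n j m @ xs = [] then None else Some (hd (buf n j m @ xs))) \<and>
     buf t j m \<in> set (subseqs (tl (buf n j m @ xs))) \<and>
     length (buf t j m) = min (Bmux l j) (length (buf n j m @ xs) - 1))"

definition mux_content :: "nat \<Rightarrow> nat \<Rightarrow> nat list" where
  "mux_content j m = buf n j m @ mux_input j m"

lemma mux_input_spec:
  assumes "j \<in> grps l" "m < 3"
  shows "distinct (mux_input j m)" "set (mux_input j m) = {p. \<exists>g<12. g mod 3 = m \<and> route t j g = Some p}"
    "out t j m = (if mux_content j m = [] then None else Some (hd (mux_content j m)))"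
    "subseq (buf t j m) (tl (mux_content j m))"
    "length (buf t j m) = min (Bmux l j) (length (mux_content j m) - 1)"
  using someI_ex[OF step(4)[OF n_less assms]] unfolding mux_input_def[symmetric] mux_content_def
  by simp_all

lemma route_t:
  assumes "j \<in> grps l"
  shows "\<And>g. g < 12 \<Longrightarrow> route t j g \<noteq> None \<longleftrightarrow> g \<in> slots t j"
    "bij_betw (\<lambda>g. the (route t j g)) (slots t j) (routed t j)"
    "u (Suc t) j = (u t j + card (routed t j)) mod 12"
  using step(3)[OF n_less assms] by auto

lemma set_mux_input:
  assumes "j \<in> grps l" "m < 3"
  shows "set (mux_input j m) = (\<lambda>g. the (route t j g)) ` {g \<in> slots t j. g mod 3 = m}"
proof -
  have "{p. \<exists>g<12. g mod 3 = m \<and> route t j g = Some p} =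
      (\<lambda>g. the (route t j g)) ` {g. g < 12 \<and> g mod 3 = m \<and> route t j g \<noteq> None}"
    by (auto intro!: image_eqI)
  also have "{g. g < 12 \<and> g mod 3 = m \<and> route t j g \<noteq> None} = {g \<in> slots t j. g mod 3 = m}"
    using route_t(1)[OF assms(1)] by (auto simp: slots_def)
  finally show ?thesis using mux_input_spec(2)[OF assms] by simp
qed

lemma length_mux_input:
  assumes "j \<in> grps l" "m < 3"
  shows "length (mux_input j m) = card {i. 1 \<le> i \<and> i \<le> card (routed t j) \<and> (u t j + i) mod 3 = m}"
proof -
  define k where "k = card (routed t j)"
  define f where "f i = (u t j + i) mod 12" for i
  have slots: "slots t j = f ` {1..k}" unfolding slots_def f_def k_def by auto
  have "card (f ` {1..k}) = card {1..k}"
    using bij_betw_same_card[OF route_t(2)[OF assms(1)]] by (simp add: slots k_def)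
  then have inj: "inj_on f {1..k}" by (simp add: inj_on_iff_eq_card)
  have "inj_on (\<lambda>g. the (route t j g)) (slots t j)"
    using route_t(2)[OF assms(1)] by (simp add: bij_betw_def)
  then have "inj_on (\<lambda>g. the (route t j g)) {g \<in> slots t j. g mod 3 = m}"
    by (rule inj_on_subset) auto
  then have "card (set (mux_input j m)) = card {g \<in> slots t j. g mod 3 = m}"
    unfolding set_mux_input[OF assms] by (rule card_image)
  then have "length (mux_input j m) = card {g \<in> slots t j. g mod 3 = m}"
    using distinct_card[OF mux_input_spec(1)[OF assms]] by simp
  also have "{g \<in> slots t j. g mod 3 = m} = f ` {i. 1 \<le> i \<and> i \<le> k \<and> (u t j + i) mod 3 = m}"
    unfolding slots f_def by (auto simp: mod_mod_cancel)
  also have "card \<dots> = card {i. 1 \<le> i \<and> i \<le> k \<and> (u t j + i) mod 3 = m}"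
    by (rule card_image, rule inj_on_subset[OF inj]) auto
  finally show ?thesis by (simp add: k_def)
qed

lemma mux_input_subset_routed: "j \<in> grps l \<Longrightarrow> m < 3 \<Longrightarrow> set (mux_input j m) \<subseteq> routed t j"
  using set_mux_input route_t(2) by (fastforce simp: bij_betw_def)

lemma Union_mux_input:
  assumes "j \<in> grps l"
  shows "(\<Union>m<3. set (mux_input j m)) = routed t j"
proof -
  have "(\<Union>m<3. set (mux_input j m)) = (\<lambda>g. the (route t j g)) ` (\<Union>m<3. {g \<in> slots t j. g mod 3 = m})"
    using set_mux_input[OF assms] by auto
  also have "(\<Union>m<3. {g \<in> slots t j. g mod 3 = m}) = slots t j" by auto
  finally show ?thesis using route_t(2)[OF assms] by (simp add: bij_betw_def)
qed

lemma mux_input_disjoint: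
  assumes "j \<in> grps l" "m < 3" "m' < 3" "m \<noteq> m'"
  shows "set (mux_input j m) \<inter> set (mux_input j m') = {}"
proof -
  have "inj_on (\<lambda>g. the (route t j g)) (slots t j)" using route_t(2)[OF assms(1)] by (simp add: bij_betw_def)
  then show ?thesis using set_mux_input[OF assms(1,2)] set_mux_input[OF assms(1,3)] assms(4)
    by (auto dest: inj_onD)
qed

definition group_content :: "nat \<Rightarrow> nat set" where
  "group_content j = (\<Union>m<3. set (buf n j m)) \<union> routed t j"

lemma group_content_subset: "j \<in> grps l \<Longrightarrow> group_content j \<subseteq> present t"
  using candidates_subset(3)[of t] by (auto simp: group_content_def routed_def present_Suc stored_def)

lemma group_content_witness:
  assumes "j \<in> grps l" "p \<in> group_content j"
  shows "\<exists>s\<in>{1..t}. t - s < Bmux l j \<and> tag_in_range j s p"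
proof (cases "p \<in> routed t j")
  case True
  then show ?thesis using routed_eq[OF assms(1)] candidates_subset(3)[of t] Bmux_pos[of l j]
    by (auto simp: tag_in_range_def intro!: bexI[of _ t])
next
  case False
  then obtain m i where m: "m < 3" "i < length (buf n j m)" "buf n j m ! i = p"
    using assms(2) by (auto simp: group_content_def in_set_conv_nth)
  then have i: "Suc i < length (mux_queue n j m)" "mux_queue n j m ! Suc i = p"
    using buf_eq_tl_mux_queue[OF assms(1) m(1)] by (auto simp: nth_tl)
  then obtain s where "s \<in> {1..n}" "Suc i + (n - s) < Bmux l j" "tag_in_range j s p"
    using run_invD(9)[OF assms(1) m(1) i(1)] by auto
  then show ?thesis by (intro bexI[of _ s]) auto
qed

text \<open>All packets of the group entered it during the last \<open>Bmux l j\<close> slots with a tag in its range,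
  and all of them lie in priority between the lowest and the highest of them.\<close>
lemma card_group_content_le:
  assumes "j \<in> grps l"
  shows "card (group_content j) \<le> tag_hi l j + 1 - tag_lo l j + (Bmux l j - 1)"
proof (cases "group_content j = {}")
  case False
  have fin: "finite (group_content j)"
    using group_content_subset[OF assms] flow.finite_S[of t] by (auto intro: finite_subset)
  obtain p where p: "p \<in> group_content j" "\<forall>q\<in>group_content j. prio p \<le> prio q"
    using ex_min_prio[OF fin False] by blast
  obtain p' where p': "p' \<in> group_content j" "\<forall>q\<in>group_content j. prio q \<le> prio p'"
    using ex_max_prio[OF fin False] by blast
  obtain s where s: "s \<in> {1..t}" "t - s < Bmux l j" "tag_in_range j s p"
    using group_content_witness[OF assms p(1)] by blast
  obtain s' where s': "s' \<in> {1..t}" "t - s' < Bmux l j" "tag_in_range j s' p'"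
    using group_content_witness[OF assms p'(1)] by blast
  have "card (group_content j) \<le> card {q \<in> present t. prio p \<le> prio q \<and> prio q \<le> prio p'}"
    using group_content_subset[OF assms] p p' flow.finite_S[of t] by (intro card_mono) auto
  also have "\<dots> \<le> tag_hi l j + 1 - tag_lo l j + (t - min s s')"
    using group_content_subset[OF assms] p(1) p'(1) s s' p(2)[rule_format, OF p'(1)]
    by (intro flow.card_prio_between_le) (auto simp: tag_in_range_def tag_eq_prio_rank)
  finally show ?thesis using s s' by linarith
qed simp

lemma mux_content_distinct: "j \<in> grps l \<Longrightarrow> m < 3 \<Longrightarrow> distinct (mux_content j m)"
  using run_invD(5) buf_eq_tl_mux_queue buf_entering_disjoint mux_input_spec(1) mux_input_subset_routed
  by (fastforce simp: mux_content_def routed_def distinct_tl)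

lemma mux_content_disjoint:
  assumes "j \<in> grps l" "m < 3" "j' \<in> grps l" "m' < 3" "(j, m) \<noteq> (j', m')"
  shows "set (mux_content j m) \<inter> set (mux_content j' m') = {}"
proof -
  have "set (buf n j m) \<inter> set (buf n j' m') = {}"
    using run_invD(8)[OF assms] buf_eq_tl_mux_queue assms by (metis disjoint_iff list.set_sel(2) tl_Nil)
  moreover have "set (mux_input j m) \<inter> set (mux_input j' m') = {}"
    using mux_input_disjoint routed_disjoint mux_input_subset_routed assms by (cases "j = j'") blast+
  moreover have "set (mux_input j m) \<subseteq> entering t" "set (mux_input j' m') \<subseteq> entering t"
    using mux_input_subset_routed assms by (auto simp: routed_def)
  ultimately show ?thesis
    using buf_entering_disjoint[OF assms(1,2)] buf_entering_disjoint[OF assms(3,4)]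
    by (auto simp: mux_content_def)
qed

lemma Union_mux_content: "j \<in> grps l \<Longrightarrow> (\<Union>m<3. set (mux_content j m)) = group_content j"
  using Union_mux_input by (auto simp: mux_content_def group_content_def)

lemma sum_length_mux_content: "j \<in> grps l \<Longrightarrow> (\<Sum>m<3. length (mux_content j m)) = card (group_content j)"
  using card_UN_disjoint[of "{..<3}" "\<lambda>m. set (mux_content j m)"] mux_content_disjoint[of j _ j]
    Union_mux_content[of j] distinct_card[OF mux_content_distinct] by auto

lemma rr_balanced_mux_content:
  assumes "j \<in> grps l"
  shows "rr_balanced (\<lambda>m. length (mux_content j m)) (u (Suc t) j)"
proof -
  define k where "k = card (routed t j)"
  define b where "b m = length (buf n j m) + card {i. 1 \<le> i \<and> i \<le> k \<and> (u t j + i) mod 3 = m}" for m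
  have "rr_balanced b (u t j + k)"
    unfolding b_def by (rule rr_balanced_add[OF run_invD(10)[OF assms]])
  moreover have "m < 3 \<Longrightarrow> length (mux_content j m) = b m" for m
    using length_mux_input[OF assms] by (simp add: mux_content_def b_def k_def)
  ultimately have "rr_balanced (\<lambda>m. length (mux_content j m)) (u t j + k)"
    using rr_balanced_cong[of "\<lambda>m. length (mux_content j m)" b] by blast
  moreover have "(u t j + k) mod 3 = u (Suc t) j mod 3"
    using route_t(3)[OF assms] by (simp add: k_def mod_mod_cancel)
  ultimately show ?thesis using rr_balanced_mod_3 by blast
qed

lemma length_mux_content_le:
  assumes "j \<in> grps l" "m < 3"
  shows "length (mux_content j m) \<le> Bmux l j"
proof (rule ccontr)
  assume long: "\<not> length (mux_content j m) \<le> Bmux l j"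
  have "Bmux l j \<le> length (mux_content j m')" if "m' \<in> {..<3} - {m}" for m'
    using rr_balanced_le_Suc[OF rr_balanced_mux_content[OF assms(1)] assms(2), of m'] that long by auto
  then have "card ({..<3} - {m}) * Bmux l j \<le> (\<Sum>m'\<in>{..<3} - {m}. length (mux_content j m'))"
    using sum_bounded_below[of "{..<3} - {m}" "Bmux l j"] by simp
  moreover have "card ({..<3::nat} - {m}) = 2" using assms(2) by simp
  ultimately have "2 * Bmux l j \<le> (\<Sum>m'\<in>{..<3} - {m}. length (mux_content j m'))" by simp
  moreover have "(\<Sum>m'<3. length (mux_content j m')) =
      length (mux_content j m) + (\<Sum>m'\<in>{..<3} - {m}. length (mux_content j m'))"
    using assms(2) by (simp add: sum.remove)
  moreover have "card (group_content j) \<le> tag_hi l j + 1 - tag_lo l j + (Bmux l j - 1)"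
    "Suc (tag_hi l j) - tag_lo l j \<le> 2 * Bmux l j" "1 \<le> Bmux l j"
    using card_group_content_le[OF assms(1)] group_width_le[of j l] Bmux_pos[of l j] assms(1)
    by (auto simp: grps_iff)
  ultimately show False using sum_length_mux_content[OF assms(1)] long by linarith
qed

lemma mux_step:
  assumes "j \<in> grps l" "m < 3"
  shows "mux_queue t j m = mux_content j m" "buf t j m = tl (mux_content j m)"
    "out t j m = None \<Longrightarrow> buf t j m = []"
proof -
  have "length (buf t j m) = length (tl (mux_content j m))"
    using mux_input_spec(5)[OF assms] length_mux_content_le[OF assms] by simp
  then show buf: "buf t j m = tl (mux_content j m)"
    using mux_input_spec(4)[OF assms] subseq_same_length by blast
  then show "mux_queue t j m = mux_content j m" "out t j m = None \<Longrightarrow> buf t j m = []"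
    using mux_input_spec(3)[OF assms] by (cases "mux_content j m"; simp add: mux_queue_def)+
qed

lemma stored_t: "Sto t = present t - set_option (dep t) - set_option (loss t)"
proof -
  define bufs where "bufs = (\<Union>j\<in>grps l. \<Union>m<3. set (buf n j m))"
  have "Sto t = (\<Union>j\<in>grps l. group_content j)"
    using mux_step(1) Union_mux_content by (simp add: stored_eq_mux_queues)
  also have "\<dots> = bufs \<union> (entering t - set_option (dep t) - set_option (loss t))"
    using routed_Union by (auto simp: group_content_def bufs_def)
  finally have "Sto t = bufs \<union> (entering t - set_option (dep t) - set_option (loss t))" .
  moreover have "present t = bufs \<union> entering t"
    by (auto simp: present_Suc entering_def bufs_def stored_def outs_def)
  moreover have "bufs \<inter> entering t = {}" using buf_entering_disjoint by (auto simp: bufs_def)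
  moreover have "set_option (dep t) \<subseteq> entering t" "set_option (loss t) \<subseteq> entering t"
    using dep_t(2) loss_t(2) by (cases "dep t"; cases "loss t"; auto)+
  ultimately show ?thesis by blast
qed

lemma slot_ok_t: "slot_ok t"
  unfolding slot_ok_def
  using run_invD(2,3) stored_t dep_or_loss_None dep_t loss_t candidates_subset(3)[of t]
  by (auto simp: less_Suc_eq_le)

lemma card_stored_t_le: "card (Sto t) \<le> Bstar l"
proof -
  have "card (present t) = Bstar l + 1 \<Longrightarrow> dep t \<noteq> None \<or> loss t \<noteq> None"
    using dep_t(1) loss_t(1) card_present_t run_invD(4) by (cases "a t") auto
  then show ?thesis
    using card_stored_slot[OF slot_ok_t] card_present_t_le
    by (cases "dep t"; cases "loss t") (auto simp: le_Suc_eq)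
qed

lemma mux_queue_t_witness:
  assumes "j \<in> grps l" "m < 3" "i < length (mux_queue t j m)"
  shows "\<exists>s\<in>{1..t}. i + (t - s) < Bmux l j \<and> tag_in_range j s (mux_queue t j m ! i)"
proof (cases "i < length (buf n j m)")
  case True
  then have "Suc i < length (mux_queue n j m)" "mux_queue t j m ! i = mux_queue n j m ! Suc i"
    using mux_step(1)[OF assms(1,2)] buf_eq_tl_mux_queue[OF assms(1,2)]
    by (auto simp: mux_content_def nth_append nth_tl)
  then show ?thesis using run_invD(9)[OF assms(1,2)] by fastforce
next
  case False
  then have "mux_queue t j m ! i \<in> set (mux_input j m)"
    using assms(3) mux_step(1)[OF assms(1,2)] by (auto simp: mux_content_def nth_append)
  then have "tag_in_range j t (mux_queue t j m ! i)"
    using mux_input_subset_routed[OF assms(1,2)] routed_eq[OF assms(1)] candidates_subset(3)[of t]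
    by (auto simp: tag_in_range_def)
  moreover have "i < Bmux l j"
    using assms(3) mux_step(1)[OF assms(1,2)] length_mux_content_le[OF assms(1,2)] by simp
  ultimately show ?thesis by (intro bexI[of _ t]) auto
qed

lemma run_inv_t: "run_inv t"
  unfolding run_inv_def
proof (intro conjI ballI allI impI)
  show "x \<in> {1..t} \<Longrightarrow> slot_ok x" for x using run_invD(1) slot_ok_t by (auto simp: le_Suc_eq)
  show "finite (Sto t)" "Sto t \<subseteq> {p. 0 < p \<and> p \<le> t \<and> a p}"
    using stored_t present_bounds[of t] by auto
  show "card (Sto t) \<le> Bstar l" by (rule card_stored_t_le)
  fix j assume j: "j \<in> grps l"
  have "m < 3 \<Longrightarrow> length (buf t j m) = length (mux_content j m) - 1" for m
    using mux_step(2)[OF j] by simp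
  then show "rr_balanced (\<lambda>m. length (buf t j m)) (u (Suc t) j)"
    using rr_balanced_diff_1[OF rr_balanced_mux_content[OF j]]
      rr_balanced_cong[of "\<lambda>m. length (buf t j m)" "\<lambda>m. length (mux_content j m) - 1"] by blast
  fix m :: nat assume m: "m < 3"
  show "distinct (mux_queue t j m)" "length (mux_queue t j m) \<le> Bmux l j"
    using mux_step(1)[OF j m] mux_content_distinct[OF j m] length_mux_content_le[OF j m] by simp_all
  show "out t j m = None \<Longrightarrow> buf t j m = []" by (rule mux_step(3)[OF j m])
  show "i < length (mux_queue t j m) \<Longrightarrow>
      \<exists>s\<in>{1..t}. i + (t - s) < Bmux l j \<and> tag_in_range j s (mux_queue t j m ! i)" for i
    by (rule mux_queue_t_witness[OF j m])
  fix j' m' assume "j' \<in> grps l" "m' < 3" "(j, m) \<noteq> (j', m')"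
  then show "set (mux_queue t j m) \<inter> set (mux_queue t j' m') = {}"
    using mux_content_disjoint[OF j m] mux_step(1) j m by simp
qed

end

context switch_run
begin

lemma run_inv_0: "run_inv 0"
proof -
  have "mux_queue 0 j m = []" for j m using initial by (simp add: mux_queue_def)
  then show ?thesis using initial by (simp add: run_inv_def stored_eq_mux_queues rr_balanced_def)
qed

lemma run_inv_upto: "n \<le> N \<Longrightarrow> run_inv n"
proof (induction n)
  case (Suc n)
  then interpret switch_run_step l a c prio buf out dep loss route u N n
    by unfold_locales auto
  show ?case by (rule run_inv_t)
qed (rule run_inv_0)

end

section \<open>Construction of a run\<close>

definition rr_slots :: "nat \<Rightarrow> nat \<Rightarrow> nat set" where
  "rr_slots v k = {(v + i) mod 12 | i. 1 \<le> i \<and> i \<le> k}"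

lemma card_rr_slots: "k \<le> 12 \<Longrightarrow> card (rr_slots v k) = k"
proof -
  assume "k \<le> 12"
  then have "inj_on (\<lambda>i. (v + i) mod 12) {1..k}"
    using inj_on_subset[OF inj_on_add_mod[of v 12 1], of "{1..k}"] by fastforce
  moreover have "rr_slots v k = (\<lambda>i. (v + i) mod 12) ` {1..k}" by (auto simp: rr_slots_def)
  ultimately show ?thesis by (simp add: card_image)
qed

lemma ex_route:
  assumes "finite A" "card A \<le> 12"
  shows "\<exists>r. (\<forall>g<12. r g \<noteq> None \<longleftrightarrow> g \<in> rr_slots v (card A)) \<and>
    bij_betw (\<lambda>g. the (r g)) (rr_slots v (card A)) A"
proof -
  have "finite (rr_slots v (card A))" "card (rr_slots v (card A)) = card A"
    using card_rr_slots[OF assms(2)] by (auto simp: rr_slots_def)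
  then obtain h where h: "bij_betw h (rr_slots v (card A)) A"
    using finite_same_card_bij assms(1) by blast
  have "rr_slots v (card A) \<subseteq> {..<12}" by (auto simp: rr_slots_def)
  then show ?thesis using h
    by (intro exI[of _ "\<lambda>g. if g \<in> rr_slots v (card A) then Some (h g) else None"])
      (auto cong: bij_betw_cong)
qed

definition inputs_of :: "(nat \<Rightarrow> nat option) \<Rightarrow> nat \<Rightarrow> nat list" where
  "inputs_of r m = map (\<lambda>g. the (r g)) (filter (\<lambda>g. g mod 3 = m \<and> r g \<noteq> None) [0..<12])"

lemma inputs_of_spec:
  assumes "\<forall>g<12. r g \<noteq> None \<longleftrightarrow> g \<in> U" "inj_on (\<lambda>g. the (r g)) U"
  shows "distinct (inputs_of r m)" "set (inputs_of r m) = {p. \<exists>g<12. g mod 3 = m \<and> r g = Some p}"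
proof -
  have "set (filter (\<lambda>g. g mod 3 = m \<and> r g \<noteq> None) [0..<12]) \<subseteq> U" using assms(1) by auto
  then show "distinct (inputs_of r m)"
    unfolding inputs_of_def distinct_map using inj_on_subset[OF assms(2)] by simp
  show "set (inputs_of r m) = {p. \<exists>g<12. g mod 3 = m \<and> r g = Some p}"
    unfolding inputs_of_def by force
qed

lemma outs_slice: "outs l (\<lambda>_. out n) n J = outs l out n J"
  by (simp add: outs_def)

lemma stored_slice: "stored l (\<lambda>_. buf n) (\<lambda>_. out n) n = stored l buf out n"
  by (simp add: stored_def outs_def)

lemma tag_slice: "tag l a prio (\<lambda>_. buf n) (\<lambda>_. out n) (Suc n) = tag l a prio buf out (Suc n)"
  by (rule ext) (simp add: tag_def stored_slice)

lemma qsys_slice: "qsys l (\<lambda>_. buf n) (\<lambda>_. out n) n = qsys l buf out n"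
  by (simp add: qsys_def stored_slice)

lemma finite_outs: "finite (outs l out n J)"
proof -
  have "outs l out n J \<subseteq> (\<lambda>(j, m). the (out n j m)) ` (grps l \<times> {..<3})"
    unfolding outs_def by force
  then show ?thesis by (rule finite_subset) (simp add: grps_def)
qed

type_synonym buf_run = "nat \<Rightarrow> nat \<Rightarrow> nat \<Rightarrow> nat list"
type_synonym out_run = "nat \<Rightarrow> nat \<Rightarrow> nat \<Rightarrow> nat option"

text \<open>Buffers and departing packets of all multiplexers at the end of a slot \<open>n\<close>, and \<open>u_j(n + 1)\<close>.\<close>
type_synonym switch_state = "(nat \<Rightarrow> nat \<Rightarrow> nat list) \<times> (nat \<Rightarrow> nat \<Rightarrow> nat option) \<times> (nat \<Rightarrow> nat)"

locale switch_construction =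
  fixes l :: nat and a c :: "nat \<Rightarrow> bool" and prio :: "nat \<Rightarrow> 'p::linorder"
begin

text \<open>The choices made by rules (i)--(iii) in slot \<open>Suc n\<close>; they read the run only at slot \<open>n\<close>, so
  the recursion below may pass them constant runs.\<close>
definition pick_dep :: "out_run \<Rightarrow> nat \<Rightarrow> nat option" where
  "pick_dep out n = (let C = arr_set a (Suc n) \<union> outs l out n {1, 2} in
     if c (Suc n) \<and> C \<noteq> {} then Some (SOME p. p \<in> C \<and> (\<forall>q\<in>C. prio q \<le> prio p)) else None)"

definition pick_loss :: "buf_run \<Rightarrow> out_run \<Rightarrow> nat \<Rightarrow> nat option" where
  "pick_loss buf out n = (let C = arr_set a (Suc n) \<union> outs l out n {2 * l - 1} in
     if \<not> c (Suc n) \<and> a (Suc n) \<and> qsys l buf out n = Bstar l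
     then Some (SOME p. p \<in> C \<and> (\<forall>q\<in>C. prio p \<le> prio q)) else None)"

definition to_group :: "buf_run \<Rightarrow> out_run \<Rightarrow> nat \<Rightarrow> nat \<Rightarrow> nat set" where
  "to_group buf out n j = {p \<in> arr_set a (Suc n) \<union> outs l out n (grps l) - set_option (pick_dep out n)
     - set_option (pick_loss buf out n). assigned l (tag l a prio buf out (Suc n) p) j}"

definition pick_route :: "buf_run \<Rightarrow> out_run \<Rightarrow> nat \<Rightarrow> nat \<Rightarrow> nat \<Rightarrow> nat \<Rightarrow> nat option" where
  "pick_route buf out v n j = (SOME r. (\<forall>g<12. r g \<noteq> None \<longleftrightarrow> g \<in> rr_slots v (card (to_group buf out n j))) \<and>
     bij_betw (\<lambda>g. the (r g)) (rr_slots v (card (to_group buf out n j))) (to_group buf out n j))"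

primrec state :: "nat \<Rightarrow> switch_state" where
  "state 0 = ((\<lambda>j m. []), (\<lambda>j m. None), (\<lambda>j. 0))"
| "state (Suc n) = (case state n of (B, Q, V) \<Rightarrow>
     let L = (\<lambda>j m. B j m @ inputs_of (pick_route (\<lambda>_. B) (\<lambda>_. Q) (V j) n j) m) in
     ((\<lambda>j m. take (Bmux l j) (tl (L j m))),
      (\<lambda>j m. if L j m = [] then None else Some (hd (L j m))),
      (\<lambda>j. (V j + card (to_group (\<lambda>_. B) (\<lambda>_. Q) n j)) mod 12)))"

definition run_buf :: buf_run where
  "run_buf n = fst (state n)"

definition run_out :: out_run where
  "run_out n = fst (snd (state n))"

definition run_u :: "nat \<Rightarrow> nat \<Rightarrow> nat" where
  "run_u t = (case t of 0 \<Rightarrow> (\<lambda>j. 0) | Suc n \<Rightarrow> snd (snd (state n)))"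

definition run_dep :: "nat \<Rightarrow> nat option" where
  "run_dep t = (case t of 0 \<Rightarrow> None | Suc n \<Rightarrow> pick_dep run_out n)"

definition run_loss :: "nat \<Rightarrow> nat option" where
  "run_loss t = (case t of 0 \<Rightarrow> None | Suc n \<Rightarrow> pick_loss run_buf run_out n)"

definition run_route :: out_run where
  "run_route t j = (case t of 0 \<Rightarrow> (\<lambda>g. None) | Suc n \<Rightarrow> pick_route run_buf run_out (run_u t j) n j)"

lemma to_group_slice: "to_group (\<lambda>_. buf n) (\<lambda>_. out n) n j = to_group buf out n j"
  by (simp add: to_group_def pick_dep_def pick_loss_def outs_slice tag_slice qsys_slice)

lemma run_Suc:
  fixes n :: nat
  defines "L j m \<equiv> run_buf n j m @ inputs_of (run_route (Suc n) j) m"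
  shows "run_buf (Suc n) j m = take (Bmux l j) (tl (L j m))"
    "run_out (Suc n) j m = (if L j m = [] then None else Some (hd (L j m)))"
    "run_u (Suc (Suc n)) j = (run_u (Suc n) j + card (to_group run_buf run_out n j)) mod 12"
proof -
  obtain B Q V where st: "state n = (B, Q, V)" by (cases "state n")
  then have "run_buf n = B" "run_out n = Q" "run_u (Suc n) = V"
    by (simp_all add: run_buf_def run_out_def run_u_def)
  then have "to_group (\<lambda>_. B) (\<lambda>_. Q) n j = to_group run_buf run_out n j"
    "pick_route (\<lambda>_. B) (\<lambda>_. Q) v n j = pick_route run_buf run_out v n j" for j v
    using to_group_slice[of run_buf n run_out] by (simp_all add: pick_route_def)
  then show "run_buf (Suc n) j m = take (Bmux l j) (tl (L j m))"
    "run_out (Suc n) j m = (if L j m = [] then None else Some (hd (L j m)))"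
    "run_u (Suc (Suc n)) j = (run_u (Suc n) j + card (to_group run_buf run_out n j)) mod 12"
    using st \<open>run_buf n = B\<close> \<open>run_u (Suc n) = V\<close>
    by (simp_all add: L_def run_buf_def run_out_def run_u_def run_route_def)
qed

lemma pick_dep_spec:
  fixes out :: out_run and n :: nat
  defines "C \<equiv> arr_set a (Suc n) \<union> outs l out n {1, 2}"
  shows "if c (Suc n) \<and> C \<noteq> {} then \<exists>p. pick_dep out n = Some p \<and> p \<in> C \<and> (\<forall>q\<in>C. prio q \<le> prio p)
    else pick_dep out n = None"
proof (cases "c (Suc n) \<and> C \<noteq> {}")
  case True
  have "finite C" using finite_outs by (simp add: C_def arr_set_def)
  then have "\<exists>p. p \<in> C \<and> (\<forall>q\<in>C. prio q \<le> prio p)"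
    using ex_max_prio[where prio = prio and A = C] True by blast
  moreover have "pick_dep out n = Some (SOME p. p \<in> C \<and> (\<forall>q\<in>C. prio q \<le> prio p))"
    using True unfolding pick_dep_def Let_def C_def[symmetric] by simp
  ultimately show ?thesis using someI_ex True by simp
next
  case False
  then show ?thesis unfolding pick_dep_def Let_def C_def[symmetric] by simp
qed

lemma pick_loss_spec:
  fixes buf :: buf_run and out :: out_run and n :: nat
  defines "C \<equiv> arr_set a (Suc n) \<union> outs l out n {2 * l - 1}"
  shows "if \<not> c (Suc n) \<and> a (Suc n) \<and> qsys l buf out n = Bstar l
    then \<exists>p. pick_loss buf out n = Some p \<and> p \<in> C \<and> (\<forall>q\<in>C. prio p \<le> prio q)
    else pick_loss buf out n = None"
proof (cases "\<not> c (Suc n) \<and> a (Suc n) \<and> qsys l buf out n = Bstar l")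
  case True
  have "finite C" "C \<noteq> {}" using finite_outs True by (simp_all add: C_def arr_set_def)
  then have "\<exists>p. p \<in> C \<and> (\<forall>q\<in>C. prio p \<le> prio q)"
    using ex_min_prio[where prio = prio and A = C] by blast
  moreover have "pick_loss buf out n = Some (SOME p. p \<in> C \<and> (\<forall>q\<in>C. prio p \<le> prio q))"
    using True unfolding pick_loss_def Let_def C_def[symmetric] by simp
  ultimately show ?thesis using someI_ex True by simp
next
  case False
  then show ?thesis unfolding pick_loss_def Let_def C_def[symmetric] by (simp only: if_not_P[OF False] if_False)
qed

lemma pick_route_spec:
  assumes "card (to_group buf out n j) \<le> 12"
  shows "(\<forall>g<12. pick_route buf out v n j g \<noteq> None \<longleftrightarrow> g \<in> rr_slots v (card (to_group buf out n j))) \<and>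
    bij_betw (\<lambda>g. the (pick_route buf out v n j g)) (rr_slots v (card (to_group buf out n j))) (to_group buf out n j)"
proof -
  have "finite (to_group buf out n j)"
    using finite_outs[of l out n "grps l"] by (auto simp: to_group_def arr_set_def intro: finite_subset)
  from someI_ex[OF ex_route[OF this assms]] show ?thesis unfolding pick_route_def .
qed

lemma run_route_Suc:
  assumes "card (to_group run_buf run_out n j) \<le> 12"
  shows "(\<forall>g<12. run_route (Suc n) j g \<noteq> None \<longleftrightarrow>
        g \<in> {(run_u (Suc n) j + i) mod 12 | i. 1 \<le> i \<and> i \<le> card (to_group run_buf run_out n j)}) \<and>
      bij_betw (\<lambda>g. the (run_route (Suc n) j g))
        {(run_u (Suc n) j + i) mod 12 | i. 1 \<le> i \<and> i \<le> card (to_group run_buf run_out n j)}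
        (to_group run_buf run_out n j) \<and>
      run_u (Suc (Suc n)) j = (run_u (Suc n) j + card (to_group run_buf run_out n j)) mod 12"
  using pick_route_spec[OF assms] run_Suc(3) by (simp add: run_route_def rr_slots_def)

lemma run_mux_Suc:
  assumes "card (to_group run_buf run_out n j) \<le> 12"
  shows "\<exists>xs. distinct xs \<and> set xs = {p. \<exists>g<12. g mod 3 = m \<and> run_route (Suc n) j g = Some p} \<and>
      run_out (Suc n) j m = (if run_buf n j m @ xs = [] then None else Some (hd (run_buf n j m @ xs))) \<and>
      run_buf (Suc n) j m \<in> set (subseqs (tl (run_buf n j m @ xs))) \<and>
      length (run_buf (Suc n) j m) = min (Bmux l j) (length (run_buf n j m @ xs) - 1)"
proof -
  have "\<forall>g<12. run_route (Suc n) j g \<noteq> None \<longleftrightarrow> g \<in> rr_slots (run_u (Suc n) j) (card (to_group run_buf run_out n j))"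
    "inj_on (\<lambda>g. the (run_route (Suc n) j g)) (rr_slots (run_u (Suc n) j) (card (to_group run_buf run_out n j)))"
    using pick_route_spec[OF assms] by (auto simp: run_route_def bij_betw_def)
  from inputs_of_spec[OF this] show ?thesis
    by (intro exI[of _ "inputs_of (run_route (Suc n) j) m"])
      (auto simp: run_Suc(1,2) intro: prefix_imp_subseq take_is_prefix)
qed

lemma sys_step_run:
  assumes "\<forall>j\<in>grps l. card (to_group run_buf run_out n j) \<le> 12"
  shows "sys_step l a prio c run_buf run_out run_dep run_loss run_route run_u n"
proof -
  have picks: "run_dep (Suc n) = pick_dep run_out n" "run_loss (Suc n) = pick_loss run_buf run_out n"
    by (simp_all add: run_dep_def run_loss_def)
  have to_group: "{p \<in> arr_set a (Suc n) \<union> outs l run_out n (grps l) - set_option (pick_dep run_out n)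
      - set_option (pick_loss run_buf run_out n). assigned l (tag l a prio run_buf run_out (Suc n) p) j}
      = to_group run_buf run_out n j" for j
    by (simp add: to_group_def)
  show ?thesis
    unfolding sys_step_def Let_def picks to_group
    using pick_dep_spec[where out = run_out and n = n] pick_loss_spec[where buf = run_buf and out = run_out and n = n]
      run_route_Suc run_mux_Suc assms
    by (intro conjI ballI allI impI) auto
qed

lemma sys_run_constructed:
  assumes "1 \<le> l" "inj_on prio {t. 0 < t \<and> a t}"
  shows "sys_run l a prio c run_buf run_out run_dep run_loss run_route run_u"
proof -
  have init: "run_buf 0 j m = [] \<and> run_out 0 j m = None" "run_u 1 j = 0" for j m
    by (simp_all add: run_buf_def run_out_def run_u_def)
  have "sys_step l a prio c run_buf run_out run_dep run_loss run_route run_u n" for n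
  proof (induction n rule: less_induct)
    case (less n)
    interpret switch_run l a c prio run_buf run_out run_dep run_loss run_route run_u n
      using assms init less.IH by unfold_locales auto
    interpret switch_run_at l a c prio run_buf run_out run_dep run_loss run_route run_u n n
      using run_inv_upto by unfold_locales simp
    have "card (to_group run_buf run_out n j) \<le> 12" if "j \<in> grps l" for j
    proof -
      have "card (to_group run_buf run_out n j) \<le> card {p \<in> entering (Suc n). assigned l (tg (Suc n) p) j}"
        using finite_outs[of l run_out n "grps l"]
        by (intro card_mono) (auto simp: to_group_def entering_def arr_set_def)
      also have "\<dots> \<le> 10" using card_entering_assigned_le[OF that] .
      finally show ?thesis by simp
    qed
    then show ?case by (intro sys_step_run ballI)
  qed
  then show ?thesis using init by (simp add: sys_run_iff)
qed

end

lemma sys_run_priority_queue: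
  assumes "1 \<le> l" "inj_on prio {t. 0 < t \<and> a t}" "sys_run l a prio c buf out dep loss route u"
  shows "priority_queue (Bstar l) a c (qsys l buf out) dep loss (tag l a prio buf out)"
proof -
  have run: "\<forall>j m. buf 0 j m = [] \<and> out 0 j m = None" "\<forall>j. u 1 j = 0"
    "\<forall>n. sys_step l a prio c buf out dep loss route u n"
    using assms(3) by (simp_all add: sys_run_iff)
  have "qsys l buf out 0 = 0" using run(1) by (simp add: qsys_def stored_def outs_def)
  moreover have "int (qsys l buf out t) = int (qsys l buf out (t - 1)) + of_bool (a t)
        - of_bool (dep t \<noteq> None) - of_bool (loss t \<noteq> None) \<and>
      (dep t \<noteq> None \<longleftrightarrow> c t \<and> qsys l buf out (t - 1) + of_bool (a t) > 0) \<and>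
      (loss t \<noteq> None \<longleftrightarrow> \<not> c t \<and> qsys l buf out (t - 1) = Bstar l \<and> a t) \<and>
      (\<forall>i. dep t = Some i \<longrightarrow> tag l a prio buf out t i = 1) \<and>
      (\<forall>i. loss t = Some i \<longrightarrow> tag l a prio buf out t i = Bstar l + 1)" if "0 < t" for t
  proof -
    interpret switch_run l a c prio buf out dep loss route u t
      using assms(1,2) run by unfold_locales auto
    have "slot_ok t" using run_inv_upto[of t] that by (simp add: run_inv_def)
    then show ?thesis using slot_ok_imp_pq[of t] that by (simp add: qsys_def)
  qed
  ultimately show ?thesis by (simp add: priority_queue_def)
qed

theorem theorem1:
  fixes l :: nat and a c :: "nat \<Rightarrow> bool" and prio :: "nat \<Rightarrow> 'p::linorder"
  assumes "l \<ge> 1"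
    and "inj_on prio {t. 0 < t \<and> a t}"
  shows "(\<exists>buf out dep loss route u. sys_run l a prio c buf out dep loss route u) \<and>
         (\<forall>buf out dep loss route u. sys_run l a prio c buf out dep loss route u \<longrightarrow>
            priority_queue (Bstar l) a c (qsys l buf out) dep loss (tag l a prio buf out))"
  using switch_construction.sys_run_constructed[OF assms] sys_run_priority_queue[OF assms] by blast

end
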